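(* Let $G$ be a topological group and $A$ a topological $G$-module. Suppose that for every $p\ge0$ the augmented column complex $0\to A_c^p(G,A)\xrightarrow{\epsilon}A_{lc}^{p,0}(G,A)\xrightarrow{d_v}A_{lc}^{p,1}(G,A)\xrightarrow{d_v}\cdots$ is exact. Then the inclusion $j_v^*\colon C_c^*(G,A)\hookrightarrow\mathrm{Tot}\,A_{lc}^{*,*}(G,A)^G$ induces an isomorphism in cohomology, and for every $p$ the groups $H_{lc}^p(G,A)$, $H^p(\mathrm{Tot}\,A_{lc}^{*,*}(G,A)^G)$ and $H_c^p(G,A)$ are isomorphic.
   Context: A topological $G$-module is an abelian topological group $A$ with an action of $G$ by group automorphisms such that $G\times A\to A$ is continuous. For an identity neighbourhood $U$ of $G$ put $\Gamma_U^0:=G$ and, for $q\ge1$, $\Gamma_U^q:=\{(g_0,\dots,g_q)\in G^{q+1}\mid g_i^{-1}g_j\in U\ \forall i,j\}$. $G$ acts on maps $f\colon G^{n+1}\to A$ by $(g.f)(g_0,\dots,g_n)=g.f(g^{-1}g_0,\dots,g^{-1}g_n)$. With differential $df(g_0,\dots,g_{n+1})=\sum_i(-1)^if(g_0,\dots,\widehat{g_i},\dots,g_{n+1})$: $C_c^n(G,A)$ is the complex of continuous equivariant maps $G^{n+1}\to A$ (cohomology $H_c^n(G,A)$), and $C_{lc}^n(G,A)$ is the complex of equivariant maps whose restriction to $\Gamma_U^n$ is continuous for some identity neighbourhood $U$ (cohomology $H_{lc}^n(G,A)$). $A_c^p(G,A):=C(G^{p+1},A)$. $A_{lc}^{p,q}(G,A)$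 is the group of maps $f\colon G^{p+1}\times G^{q+1}\to A$ whose restriction to $G^{p+1}\times\Gamma_U^q$ is continuous for some identity neighbourhood $U$, with $d_hf(x_0,\dots,x_{p+1},\vec y)=\sum_{i}(-1)^if(x_0,\dots,\widehat{x_i},\dots,x_{p+1},\vec y)$ and $d_vf(\vec x,y_0,\dots,y_{q+1})=(-1)^p\sum_i(-1)^if(\vec x,y_0,\dots,\widehat{y_i},\dots,y_{q+1})$. $G$ acts diagonally, $(g.f)(\vec x,\vec y)=g.f(g^{-1}\vec x,g^{-1}\vec y)$; $A_{lc}^{p,q}(G,A)^G$ are the fixed points and $\mathrm{Tot}\,A_{lc}^{*,*}(G,A)^G$ the total complex ($\mathrm{Tot}^n=\bigoplus_{p+q=n}A_{lc}^{p,q}(G,A)^G$, differential $d_h+d_v$). The augmentation is $\epsilon(f)(\vec x,y_0)=f(\vec x)$, and $j_v^p\colon C_c^p(G,A)\to A_{lc}^{p,0}(G,A)^G\subset\mathrm{Tot}^p$ is $j_v(f)(\vec x,y_0)=f(\vec x)$. *)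

theory Defs
  imports "HOL-Analysis.Analysis" "HOL-Algebra.Coset"
begin

text \<open>The topological group G is a type 'g of class topological_group_add
(group_add is NOT assumed commutative; the group law is written additively, so
g^{-1} h is written - g + h and the identity is 0).
An (n+1)-tuple (g_0,...,g_n) in G^{n+1} is an extensional function nat => 'g on {..n}
(element of PiE {..n} (%_. UNIV)); G^{n+1} carries the product topology.
Cochains are functions on tuples which vanish outside G^{n+1} (so that they form an
abelian group under pointwise addition with equality being equality of functions).\<close>

definition gc_tuples :: "nat \<Rightarrow> (nat \<Rightarrow> 'g) set" where
  "gc_tuples n = PiE {..n} (\<lambda>_. UNIV)"

definition gc_tuple_top :: "nat \<Rightarrow> (nat \<Rightarrow> 'g::topological_space) topology" where
  "gc_tuple_top n = product_topology (\<lambda>_. euclidean) {..n}"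

definition gc_ltrans :: "'g::group_add \<Rightarrow> nat \<Rightarrow> (nat \<Rightarrow> 'g) \<Rightarrow> (nat \<Rightarrow> 'g)" where
  "gc_ltrans g n x = restrict (\<lambda>i. g + x i) {..n}"

text \<open>gc_face n i x: delete the i-th entry of the (n+2)-tuple x, giving an (n+1)-tuple\<close>
definition gc_face :: "nat \<Rightarrow> nat \<Rightarrow> (nat \<Rightarrow> 'g) \<Rightarrow> (nat \<Rightarrow> 'g)" where
  "gc_face n i x = restrict (\<lambda>k. if k < i then x k else x (Suc k)) {..n}"

definition gc_identity_nbhd :: "'g::topological_group_add set \<Rightarrow> bool" where
  "gc_identity_nbhd U \<longleftrightarrow> (\<exists>V. open V \<and> 0 \<in> V \<and> V \<subseteq> U)"

definition gc_Gamma :: "'g::group_add set \<Rightarrow> nat \<Rightarrow> (nat \<Rightarrow> 'g) set" where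
  "gc_Gamma U q = (if q = 0 then gc_tuples 0
     else {x \<in> gc_tuples q. \<forall>i\<le>q. \<forall>j\<le>q. - x i + x j \<in> U})"

definition topological_G_module ::
  "('g::topological_group_add \<Rightarrow> 'a::topological_ab_group_add \<Rightarrow> 'a) \<Rightarrow> bool" where
  "topological_G_module act \<longleftrightarrow>
     (\<forall>a. act 0 a = a) \<and> (\<forall>g h a. act (g + h) a = act g (act h a)) \<and>
     (\<forall>g a b. act g (a + b) = act g a + act g b) \<and>
     continuous_on UNIV (\<lambda>p. act (fst p) (snd p))"

definition gc_d :: "nat \<Rightarrow> ((nat \<Rightarrow> 'g) \<Rightarrow> 'a::ab_group_add) \<Rightarrow> (nat \<Rightarrow> 'g) \<Rightarrow> 'a" where
  "gc_d n f = (\<lambda>x. if x \<in> gc_tuples (Suc n)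
      then (\<Sum>i\<le>Suc n. if even i then f (gc_face n i x) else - f (gc_face n i x)) else 0)"

definition gc_equivariant ::
  "('g::group_add \<Rightarrow> 'a::ab_group_add \<Rightarrow> 'a) \<Rightarrow> nat \<Rightarrow> ((nat \<Rightarrow> 'g) \<Rightarrow> 'a) \<Rightarrow> bool" where
  "gc_equivariant act n f \<longleftrightarrow>
     (\<forall>g. \<forall>x\<in>gc_tuples n. act g (f (gc_ltrans (- g) n x)) = f x)"

definition Cc ::
  "('g::topological_group_add \<Rightarrow> 'a::topological_ab_group_add \<Rightarrow> 'a) \<Rightarrow> nat \<Rightarrow> ((nat \<Rightarrow> 'g) \<Rightarrow> 'a) set" where
  "Cc act n = {f. (\<forall>x. x \<notin> gc_tuples n \<longrightarrow> f x = 0) \<and>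
      continuous_map (gc_tuple_top n) euclidean f \<and> gc_equivariant act n f}"

definition Clc ::
  "('g::topological_group_add \<Rightarrow> 'a::topological_ab_group_add \<Rightarrow> 'a) \<Rightarrow> nat \<Rightarrow> ((nat \<Rightarrow> 'g) \<Rightarrow> 'a) set" where
  "Clc act n = {f. (\<forall>x. x \<notin> gc_tuples n \<longrightarrow> f x = 0) \<and>
      (\<exists>U. gc_identity_nbhd U \<and>
         continuous_map (subtopology (gc_tuple_top n) (gc_Gamma U n)) euclidean f) \<and>
      gc_equivariant act n f}"

definition cocycle_grp ::
  "(nat \<Rightarrow> 'c set) \<Rightarrow> (nat \<Rightarrow> 'c \<Rightarrow> 'c) \<Rightarrow> ('c \<Rightarrow> 'c \<Rightarrow> 'c) \<Rightarrow> 'c \<Rightarrow> nat \<Rightarrow> 'c monoid" where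
  "cocycle_grp C d add z n = \<lparr>carrier = {f \<in> C n. d n f = z}, mult = add, one = z\<rparr>"

definition coboundaries ::
  "(nat \<Rightarrow> 'c set) \<Rightarrow> (nat \<Rightarrow> 'c \<Rightarrow> 'c) \<Rightarrow> 'c \<Rightarrow> nat \<Rightarrow> 'c set" where
  "coboundaries C d z n = (if n = 0 then {z} else d (n - 1) ` C (n - 1))"

definition cohomology ::
  "(nat \<Rightarrow> 'c set) \<Rightarrow> (nat \<Rightarrow> 'c \<Rightarrow> 'c) \<Rightarrow> ('c \<Rightarrow> 'c \<Rightarrow> 'c) \<Rightarrow> 'c \<Rightarrow> nat \<Rightarrow> 'c set monoid" where
  "cohomology C d add z n = (cocycle_grp C d add z n) Mod (coboundaries C d z n)"

definition cohom_class ::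
  "(nat \<Rightarrow> 'c set) \<Rightarrow> (nat \<Rightarrow> 'c \<Rightarrow> 'c) \<Rightarrow> ('c \<Rightarrow> 'c \<Rightarrow> 'c) \<Rightarrow> 'c \<Rightarrow> nat \<Rightarrow> 'c \<Rightarrow> 'c set" where
  "cohom_class C d add z n f = (coboundaries C d z n) #>\<^bsub>cocycle_grp C d add z n\<^esub> f"

definition fun_add :: "('x \<Rightarrow> 'a::ab_group_add) \<Rightarrow> ('x \<Rightarrow> 'a) \<Rightarrow> 'x \<Rightarrow> 'a" where
  "fun_add f g = (\<lambda>x. f x + g x)"

definition Hc where "Hc act n = cohomology (Cc act) gc_d fun_add (\<lambda>_. 0) n"
definition Hlc where "Hlc act n = cohomology (Clc act) gc_d fun_add (\<lambda>_. 0) n"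

type_synonym ('g, 'a) bicochain = "(nat \<Rightarrow> 'g) \<Rightarrow> (nat \<Rightarrow> 'g) \<Rightarrow> 'a"

definition Ac ::
  "('g::topological_group_add \<Rightarrow> 'a::topological_ab_group_add \<Rightarrow> 'a) \<Rightarrow> nat \<Rightarrow> ((nat \<Rightarrow> 'g) \<Rightarrow> 'a) set" where
  "Ac act p = {f. (\<forall>x. x \<notin> gc_tuples p \<longrightarrow> f x = 0) \<and> continuous_map (gc_tuple_top p) euclidean f}"

definition Alc ::
  "('g::topological_group_add \<Rightarrow> 'a::topological_ab_group_add \<Rightarrow> 'a) \<Rightarrow> nat \<Rightarrow> nat \<Rightarrow> ('g, 'a) bicochain set" where
  "Alc act p q = {f. (\<forall>x y. \<not> (x \<in> gc_tuples p \<and> y \<in> gc_tuples q) \<longrightarrow> f x y = 0) \<and>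
      (\<exists>U. gc_identity_nbhd U \<and>
         continuous_map (subtopology (prod_topology (gc_tuple_top p) (gc_tuple_top q))
                                     (gc_tuples p \<times> gc_Gamma U q))
                        euclidean (\<lambda>(x, y). f x y))}"

definition Alc_G ::
  "('g::topological_group_add \<Rightarrow> 'a::topological_ab_group_add \<Rightarrow> 'a) \<Rightarrow> nat \<Rightarrow> nat \<Rightarrow> ('g, 'a) bicochain set" where
  "Alc_G act p q = {f \<in> Alc act p q. \<forall>g. \<forall>x\<in>gc_tuples p. \<forall>y\<in>gc_tuples q.
      act g (f (gc_ltrans (- g) p x) (gc_ltrans (- g) q y)) = f x y}"

definition d_h :: "nat \<Rightarrow> nat \<Rightarrow> ('g, 'a::ab_group_add) bicochain \<Rightarrow> ('g, 'a) bicochain" where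
  "d_h p q f = (\<lambda>x y. if x \<in> gc_tuples (Suc p) \<and> y \<in> gc_tuples q
      then (\<Sum>i\<le>Suc p. if even i then f (gc_face p i x) y else - f (gc_face p i x) y) else 0)"

definition d_v :: "nat \<Rightarrow> nat \<Rightarrow> ('g, 'a::ab_group_add) bicochain \<Rightarrow> ('g, 'a) bicochain" where
  "d_v p q f = (\<lambda>x y. if x \<in> gc_tuples p \<and> y \<in> gc_tuples (Suc q)
      then (let s = (\<Sum>i\<le>Suc q. if even i then f x (gc_face q i y) else - f x (gc_face q i y))
            in if even p then s else - s) else 0)"

definition aug :: "nat \<Rightarrow> ((nat \<Rightarrow> 'g) \<Rightarrow> 'a::ab_group_add) \<Rightarrow> ('g, 'a) bicochain" where
  "aug p f = (\<lambda>x y. if x \<in> gc_tuples p \<and> y \<in> gc_tuples 0 then f x else 0)"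

definition column_exact ::
  "('g::topological_group_add \<Rightarrow> 'a::topological_ab_group_add \<Rightarrow> 'a) \<Rightarrow> nat \<Rightarrow> bool" where
  "column_exact act p \<longleftrightarrow>
     inj_on (aug p) (Ac act p) \<and>
     aug p ` Ac act p \<subseteq> Alc act p 0 \<and>
     (\<forall>q. d_v p q ` Alc act p q \<subseteq> Alc act p (Suc q)) \<and>
     (\<forall>f\<in>Alc act p 0. d_v p 0 f = (\<lambda>_ _. 0) \<longleftrightarrow> (\<exists>h\<in>Ac act p. aug p h = f)) \<and>
     (\<forall>q. \<forall>f\<in>Alc act p (Suc q).
        d_v p (Suc q) f = (\<lambda>_ _. 0) \<longleftrightarrow> (\<exists>h\<in>Alc act p q. d_v p q h = f))"

definition Tot ::
  "('g::topological_group_add \<Rightarrow> 'a::topological_ab_group_add \<Rightarrow> 'a) \<Rightarrow> nat \<Rightarrow> (nat \<Rightarrow> ('g, 'a) bicochain) set" where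
  "Tot act n = {F. (\<forall>p\<le>n. F p \<in> Alc_G act p (n - p)) \<and> (\<forall>p>n. F p = (\<lambda>_ _. 0))}"

definition d_tot :: "nat \<Rightarrow> (nat \<Rightarrow> ('g, 'a::ab_group_add) bicochain) \<Rightarrow> (nat \<Rightarrow> ('g, 'a) bicochain)" where
  "d_tot n F = (\<lambda>p x y.
     (if 1 \<le> p \<and> p \<le> Suc n then d_h (p - 1) (Suc n - p) (F (p - 1)) x y else 0) +
     (if p \<le> n then d_v p (n - p) (F p) x y else 0))"

definition tot_add :: "(nat \<Rightarrow> ('g, 'a::ab_group_add) bicochain) \<Rightarrow> (nat \<Rightarrow> ('g, 'a) bicochain) \<Rightarrow> (nat \<Rightarrow> ('g, 'a) bicochain)" where
  "tot_add F H = (\<lambda>p x y. F p x y + H p x y)"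

definition HTot where "HTot act n = cohomology (Tot act) d_tot tot_add (\<lambda>_ _ _. 0) n"

definition j_v :: "nat \<Rightarrow> ((nat \<Rightarrow> 'g) \<Rightarrow> 'a::ab_group_add) \<Rightarrow> (nat \<Rightarrow> ('g, 'a) bicochain)" where
  "j_v n f = (\<lambda>p. if p = n then aug n f else (\<lambda>_ _. 0))"

end

theory Submission
  imports Defs "HOL-Library.Function_Algebras"
begin

text \<open>
  The invariant locally continuous bicochains \<open>A\<^sub>l\<^sub>c\<^sup>p\<^sup>,\<^sup>q(G,A)\<^sup>G\<close> form a double complex
  with two augmentations: the columns are augmented by \<open>C\<^sub>c\<^sup>p(G,A)\<close> and the rows by
  \<open>C\<^sub>l\<^sub>c\<^sup>q(G,A)\<close>. The augmented columns are exact by hypothesis, and stay exact after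
  passing to invariants because a preimage can be untwisted by the first coordinate of \<open>x\<close>.
  The augmented rows are always exact, by the contracting homotopy that prepends the first
  entry of \<open>y\<close> to \<open>x\<close>. A staircase argument shows that an augmentation with exact
  columns induces isomorphisms from the cohomology of the augmenting complex to that of the
  total complex. Applied to the columns this gives \<open>H\<^sub>c \<cong> H(Tot)\<close> via \<open>j\<^sub>v\<close>; applied to the
  transposed double complex, whose total complex is isomorphic to the original one, it gives
  \<open>H\<^sub>l\<^sub>c \<cong> H(Tot)\<close>.
\<close>

section \<open>Cohomology of cochain complexes\<close>

locale cochain_complex =
  fixes C :: "nat \<Rightarrow> 'c::ab_group_add set" and d :: "nat \<Rightarrow> 'c \<Rightarrow> 'c"
  assumes zero_mem: "0 \<in> C n"
    and add_mem: "x \<in> C n \<Longrightarrow> y \<in> C n \<Longrightarrow> x + y \<in> C n"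
    and uminus_mem: "x \<in> C n \<Longrightarrow> - x \<in> C n"
    and d_mem: "x \<in> C n \<Longrightarrow> d n x \<in> C (Suc n)"
    and d_add: "x \<in> C n \<Longrightarrow> y \<in> C n \<Longrightarrow> d n (x + y) = d n x + d n y"
    and d_d: "x \<in> C n \<Longrightarrow> d (Suc n) (d n x) = 0"
begin

abbreviation Z where "Z \<equiv> cocycle_grp C d (+) 0"
abbreviation B where "B \<equiv> coboundaries C d 0"
abbreviation H where "H \<equiv> cohomology C d (+) 0"
abbreviation cls where "cls \<equiv> cohom_class C d (+) 0"

lemma diff_mem: "x \<in> C n \<Longrightarrow> y \<in> C n \<Longrightarrow> x - y \<in> C n"
  using add_mem uminus_mem by (metis diff_conv_add_uminus)

lemma d_zero: "d n 0 = 0"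
  using d_add[OF zero_mem zero_mem, of n] by simp

lemma d_uminus: "x \<in> C n \<Longrightarrow> d n (- x) = - d n x"
  using d_add[OF _ uminus_mem, of x n x] d_zero by (simp add: eq_neg_iff_add_eq_0 add.commute)

lemma d_diff: "x \<in> C n \<Longrightarrow> y \<in> C n \<Longrightarrow> d n (x - y) = d n x - d n y"
  using d_add[OF _ uminus_mem, of x n y] d_uminus[of y n] by simp

lemma carrier_cocycles: "carrier (Z n) = {x \<in> C n. d n x = 0}"
  by (simp add: cocycle_grp_def)

lemma comm_group_cocycles: "comm_group (Z n)"
proof (rule comm_groupI)
  fix x assume "x \<in> carrier (Z n)"
  then show "\<exists>y\<in>carrier (Z n). y \<otimes>\<^bsub>Z n\<^esub> x = \<one>\<^bsub>Z n\<^esub>"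
    by (intro bexI[of _ "- x"]) (auto simp: cocycle_grp_def uminus_mem d_uminus)
qed (auto simp: cocycle_grp_def add_mem d_add zero_mem d_zero add.assoc add.commute)

lemma inv_cocycle: "x \<in> carrier (Z n) \<Longrightarrow> inv\<^bsub>Z n\<^esub> x = - x"
  using comm_group_cocycles
  by (intro group.inv_equality) (auto simp: cocycle_grp_def uminus_mem d_uminus comm_group_def)

lemma coboundaries_subset_cocycles: "B n \<subseteq> carrier (Z n)"
  by (cases n) (auto simp: coboundaries_def carrier_cocycles zero_mem d_zero d_mem d_d)

lemma subgroup_coboundaries: "subgroup (B n) (Z n)"
proof (rule group.subgroupI)
  show "group (Z n)"
    using comm_group_cocycles comm_group.axioms(2) by blast
  show "B n \<subseteq> carrier (Z n)"
    by (rule coboundaries_subset_cocycles)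
  show "B n \<noteq> {}"
    using zero_mem by (cases n) (auto simp: coboundaries_def)
  fix x y assume x: "x \<in> B n" and y: "y \<in> B n"
  have "inv\<^bsub>Z n\<^esub> x = - x"
    using x coboundaries_subset_cocycles inv_cocycle by blast
  then show "inv\<^bsub>Z n\<^esub> x \<in> B n"
    using x by (cases n) (auto simp: coboundaries_def uminus_mem d_uminus[symmetric])
  show "x \<otimes>\<^bsub>Z n\<^esub> y \<in> B n"
    using x y by (cases n) (auto simp: coboundaries_def cocycle_grp_def add_mem d_add[symmetric])
qed

lemma normal_coboundaries: "B n \<lhd> Z n"
  using comm_group.subgroup_imp_normal[OF comm_group_cocycles subgroup_coboundaries] .

lemma group_cohomology: "group (H n)"
  unfolding cohomology_def by (rule normal.factorgroup_is_group[OF normal_coboundaries])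

lemma zero_coboundary: "0 \<in> B n"
  by (cases n) (auto simp: coboundaries_def image_iff d_zero zero_mem intro!: bexI[of _ 0])

lemma carrier_cohomology: "carrier (H n) = cls n ` carrier (Z n)"
  by (simp add: cohomology_def carrier_FactGroup cohom_class_def)

lemma cls_mult:
  assumes "x \<in> carrier (Z n)" "y \<in> carrier (Z n)"
  shows "cls n x \<otimes>\<^bsub>H n\<^esub> cls n y = cls n (x + y)"
  using normal.rcos_sum[OF normal_coboundaries assms]
  by (simp add: cohomology_def cohom_class_def cocycle_grp_def)

lemma cls_eq_one_iff:
  assumes "x \<in> carrier (Z n)"
  shows "cls n x = \<one>\<^bsub>H n\<^esub> \<longleftrightarrow> x \<in> B n"
proof -
  interpret group "Z n" using comm_group_cocycles comm_group.axioms(2) by blast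
  show ?thesis
    using assms subgroup_coboundaries coset_join1 coset_join2
    by (auto simp: cohomology_def cohom_class_def)
qed

lemma cls_eq_iff:
  assumes "x \<in> carrier (Z n)" "y \<in> carrier (Z n)"
  shows "cls n x = cls n y \<longleftrightarrow> x - y \<in> B n"
proof -
  interpret group "Z n" using comm_group_cocycles comm_group.axioms(2) by blast
  have "x \<otimes>\<^bsub>Z n\<^esub> inv\<^bsub>Z n\<^esub> y = x - y"
    using inv_cocycle[OF assms(2)] by (simp add: cocycle_grp_def)
  moreover have "cls n x = cls n y \<longleftrightarrow> x \<in> B n #>\<^bsub>Z n\<^esub> y"
    using assms subgroup_coboundaries unfolding cohom_class_def
    by (metis rcos_self repr_independence)
  ultimately show ?thesis
    using assms subgroup.rcos_module[OF subgroup_coboundaries is_group] by simp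
qed

end

locale cochain_map =
  C: cochain_complex C d + C': cochain_complex C' d'
  for C :: "nat \<Rightarrow> 'c::ab_group_add set" and d and C' :: "nat \<Rightarrow> 'e::ab_group_add set" and d' +
  fixes \<phi> :: "nat \<Rightarrow> 'c \<Rightarrow> 'e"
  assumes map_mem: "x \<in> C n \<Longrightarrow> \<phi> n x \<in> C' n"
    and map_add: "x \<in> C n \<Longrightarrow> y \<in> C n \<Longrightarrow> \<phi> n (x + y) = \<phi> n x + \<phi> n y"
    and map_d: "x \<in> C n \<Longrightarrow> d' n (\<phi> n x) = \<phi> (Suc n) (d n x)"
begin

lemma map_zero: "\<phi> n 0 = 0"
  using map_add[OF C.zero_mem C.zero_mem, of n] by simp

lemma map_diff: "x \<in> C n \<Longrightarrow> y \<in> C n \<Longrightarrow> \<phi> n (x - y) = \<phi> n x - \<phi> n y"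
  using map_add[OF C.diff_mem, of x n y y] by (simp add: algebra_simps)

lemma map_cocycle: "x \<in> carrier (C.Z n) \<Longrightarrow> \<phi> n x \<in> carrier (C'.Z n)"
  by (simp add: C.carrier_cocycles C'.carrier_cocycles map_mem map_d map_zero)

lemma map_coboundary: "x \<in> C.B n \<Longrightarrow> \<phi> n x \<in> C'.B n"
  by (cases n) (auto simp: coboundaries_def map_zero map_d[symmetric] map_mem)

definition class_map :: "nat \<Rightarrow> 'c \<Rightarrow> 'e set" where
  "class_map n x = C'.cls n (\<phi> n x)"

lemma class_map_hom: "class_map n \<in> hom (C.Z n) (C'.H n)"
proof (rule homI)
  fix x y assume x: "x \<in> carrier (C.Z n)" and y: "y \<in> carrier (C.Z n)"
  then have "x \<in> C n" "y \<in> C n"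
    by (simp_all add: C.carrier_cocycles)
  then show "class_map n (x \<otimes>\<^bsub>C.Z n\<^esub> y) = class_map n x \<otimes>\<^bsub>C'.H n\<^esub> class_map n y"
    using C'.cls_mult[OF map_cocycle[OF x] map_cocycle[OF y]] by (simp add: class_map_def cocycle_grp_def map_add)
  show "class_map n x \<in> carrier (C'.H n)"
    using map_cocycle[OF x] by (simp add: class_map_def C'.carrier_cohomology)
qed

lemma group_hom_class_map: "group_hom (C.Z n) (C'.H n) (class_map n)"
  using class_map_hom C'.group_cohomology C.comm_group_cocycles
  by (simp add: group_hom_def group_hom_axioms_def comm_group_def)

lemma kernel_class_map:
  assumes inj: "\<And>x. x \<in> carrier (C.Z n) \<Longrightarrow> \<phi> n x \<in> C'.B n \<Longrightarrow> x \<in> C.B n"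
  shows "kernel (C.Z n) (C'.H n) (class_map n) = C.B n"
proof
  show "kernel (C.Z n) (C'.H n) (class_map n) \<subseteq> C.B n"
    using inj by (auto simp: kernel_def class_map_def C'.cls_eq_one_iff[OF map_cocycle])
  show "C.B n \<subseteq> kernel (C.Z n) (C'.H n) (class_map n)"
  proof
    fix x assume x: "x \<in> C.B n"
    then have "x \<in> carrier (C.Z n)"
      using C.coboundaries_subset_cocycles by blast
    then show "x \<in> kernel (C.Z n) (C'.H n) (class_map n)"
      using map_coboundary[OF x] by (simp add: kernel_def class_map_def C'.cls_eq_one_iff[OF map_cocycle])
  qed
qed

lemma image_class_map:
  assumes surj: "\<And>y. y \<in> carrier (C'.Z n) \<Longrightarrow> \<exists>x \<in> carrier (C.Z n). y - \<phi> n x \<in> C'.B n"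
  shows "class_map n ` carrier (C.Z n) = carrier (C'.H n)"
proof
  show "class_map n ` carrier (C.Z n) \<subseteq> carrier (C'.H n)"
    using hom_carrier[OF class_map_hom] .
  show "carrier (C'.H n) \<subseteq> class_map n ` carrier (C.Z n)"
  proof
    fix Y assume "Y \<in> carrier (C'.H n)"
    then obtain y where y: "y \<in> carrier (C'.Z n)" "Y = C'.cls n y"
      by (auto simp: C'.carrier_cohomology)
    then obtain x where x: "x \<in> carrier (C.Z n)" "y - \<phi> n x \<in> C'.B n"
      using surj by blast
    then have "Y = class_map n x"
      using y C'.cls_eq_iff[OF y(1) map_cocycle[OF x(1)]] by (simp add: class_map_def)
    then show "Y \<in> class_map n ` carrier (C.Z n)"
      using x(1) by blast
  qed
qed

lemma class_map_image_cls:
  assumes x: "x \<in> carrier (C.Z n)"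
  shows "class_map n ` C.cls n x = {class_map n x}"
proof -
  interpret Z: group "C.Z n"
    using C.comm_group_cocycles comm_group.axioms(2) by blast
  have "class_map n z = class_map n x" if z: "z \<in> C.cls n x" for z
  proof -
    have z': "z \<in> carrier (C.Z n)"
      using z x Z.r_coset_subset_G[OF C.coboundaries_subset_cocycles] by (auto simp: cohom_class_def)
    have "C.cls n z = C.cls n x"
      using z x C.subgroup_coboundaries Z.repr_independence by (simp add: cohom_class_def)
    then have "\<phi> n (z - x) \<in> C'.B n"
      using C.cls_eq_iff[OF z' x] map_coboundary by blast
    moreover have "z \<in> C n" "x \<in> C n"
      using z' x by (simp_all add: C.carrier_cocycles)
    ultimately have "\<phi> n z - \<phi> n x \<in> C'.B n"
      by (simp add: map_diff)
    then show ?thesis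
      using C'.cls_eq_iff[OF map_cocycle[OF z'] map_cocycle[OF x]] by (simp add: class_map_def)
  qed
  moreover have "x \<in> C.cls n x"
    using x C.subgroup_coboundaries Z.rcos_self by (simp add: cohom_class_def)
  ultimately show ?thesis
    by blast
qed

text \<open>By the first isomorphism theorem, since the kernel of \<open>class_map\<close> is exactly the coboundaries.\<close>

lemma cohomology_iso:
  assumes surj: "\<And>y. y \<in> carrier (C'.Z n) \<Longrightarrow> \<exists>x \<in> carrier (C.Z n). y - \<phi> n x \<in> C'.B n"
    and inj: "\<And>x. x \<in> carrier (C.Z n) \<Longrightarrow> \<phi> n x \<in> C'.B n \<Longrightarrow> x \<in> C.B n"
  shows "\<exists>\<psi>. \<psi> \<in> iso (C.H n) (C'.H n) \<and>
           (\<forall>x \<in> carrier (C.Z n). \<psi> (C.cls n x) = C'.cls n (\<phi> n x))"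
proof (intro exI conjI ballI)
  have "(\<lambda>X. the_elem (class_map n ` X)) \<in> iso (C.Z n Mod kernel (C.Z n) (C'.H n) (class_map n)) (C'.H n)"
    using group_hom.FactGroup_iso_set[OF group_hom_class_map image_class_map[OF surj]] .
  then show "(\<lambda>X. the_elem (class_map n ` X)) \<in> iso (C.H n) (C'.H n)"
    using kernel_class_map[OF inj] by (simp add: cohomology_def)
  fix x assume "x \<in> carrier (C.Z n)"
  then show "the_elem (class_map n ` C.cls n x) = C'.cls n (\<phi> n x)"
    by (simp add: class_map_image_cls) (simp add: class_map_def)
qed

end

section \<open>Double complexes and the staircase argument\<close>

definition tot_cochains :: "(nat \<Rightarrow> nat \<Rightarrow> 'c::zero set) \<Rightarrow> nat \<Rightarrow> (nat \<Rightarrow> 'c) set" where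
  "tot_cochains K n = {F. (\<forall>p\<le>n. F p \<in> K p (n - p)) \<and> (\<forall>p>n. F p = 0)}"

definition tot_diff ::
  "(nat \<Rightarrow> nat \<Rightarrow> 'c \<Rightarrow> 'c) \<Rightarrow> (nat \<Rightarrow> nat \<Rightarrow> 'c \<Rightarrow> 'c) \<Rightarrow> nat \<Rightarrow> (nat \<Rightarrow> 'c::ab_group_add) \<Rightarrow> nat \<Rightarrow> 'c"
where
  "tot_diff dv dh n F = (\<lambda>p.
     (if 1 \<le> p \<and> p \<le> Suc n then dh (p - 1) (Suc n - p) (F (p - 1)) else 0) +
     (if p \<le> n then dv p (n - p) (F p) else 0))"

definition tot_single :: "nat \<Rightarrow> 'c \<Rightarrow> nat \<Rightarrow> 'c::zero" where
  "tot_single k h = (\<lambda>p. if p = k then h else 0)"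

lemma tot_single_add: "tot_single k (x + y) = tot_single k x + tot_single k (y :: 'c::monoid_add)"
  by (rule ext) (simp add: tot_single_def)

lemma tot_single_eq_0_iff [simp]: "tot_single k h = 0 \<longleftrightarrow> h = 0"
  by (auto simp: tot_single_def fun_eq_iff)

lemma tot_single_concentrated:
  "F \<in> tot_cochains K n \<Longrightarrow> \<forall>p<n. F p = 0 \<Longrightarrow> F = tot_single n (F n)"
  by (rule ext) (auto simp: tot_cochains_def tot_single_def nat_neq_iff)

locale double_complex =
  fixes K :: "nat \<Rightarrow> nat \<Rightarrow> 'c::ab_group_add set" and dv dh :: "nat \<Rightarrow> nat \<Rightarrow> 'c \<Rightarrow> 'c"
  assumes zero_mem: "0 \<in> K p q"
    and add_mem: "x \<in> K p q \<Longrightarrow> y \<in> K p q \<Longrightarrow> x + y \<in> K p q"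
    and uminus_mem: "x \<in> K p q \<Longrightarrow> - x \<in> K p q"
    and dv_mem: "x \<in> K p q \<Longrightarrow> dv p q x \<in> K p (Suc q)"
    and dh_mem: "x \<in> K p q \<Longrightarrow> dh p q x \<in> K (Suc p) q"
    and dv_add: "dv p q (x + y) = dv p q x + dv p q y"
    and dh_add: "dh p q (x + y) = dh p q x + dh p q y"
    and dv_dv: "x \<in> K p q \<Longrightarrow> dv p (Suc q) (dv p q x) = 0"
    and dh_dh: "x \<in> K p q \<Longrightarrow> dh (Suc p) q (dh p q x) = 0"
    and dv_dh: "x \<in> K p q \<Longrightarrow> dv (Suc p) q (dh p q x) + dh p (Suc q) (dv p q x) = 0"
begin

lemma dv_zero [simp]: "dv p q 0 = 0"
  using dv_add[of p q 0 0] by simp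

lemma dh_zero [simp]: "dh p q 0 = 0"
  using dh_add[of p q 0 0] by simp

lemma tot_diff_mem:
  assumes F: "F \<in> tot_cochains K n"
  shows "tot_diff dv dh n F \<in> tot_cochains K (Suc n)"
  unfolding tot_cochains_def
proof (intro CollectI conjI allI impI)
  fix p assume p: "p \<le> Suc n"
  have "(if 1 \<le> p \<and> p \<le> Suc n then dh (p - 1) (Suc n - p) (F (p - 1)) else 0) \<in> K p (Suc n - p)"
    using F p dh_mem zero_mem
    by (cases p) (auto simp: tot_cochains_def)
  moreover have "(if p \<le> n then dv p (n - p) (F p) else 0) \<in> K p (Suc n - p)"
    using F dv_mem zero_mem by (auto simp: tot_cochains_def Suc_diff_le)
  ultimately show "tot_diff dv dh n F p \<in> K p (Suc n - p)"
    unfolding tot_diff_def by (rule add_mem)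
next
  fix p assume "Suc n < p"
  then show "tot_diff dv dh n F p = 0"
    using F by (simp add: tot_diff_def tot_cochains_def)
qed

lemma tot_diff_add: "tot_diff dv dh n (F + G) = tot_diff dv dh n F + tot_diff dv dh n G"
  by (rule ext) (simp add: tot_diff_def dv_add dh_add algebra_simps)

text \<open>In degree \<open>p\<close> of \<open>d (d F)\<close> the four terms are \<open>dh dh\<close>, \<open>dv dv\<close> and the
  anticommuting pair \<open>dv dh + dh dv\<close> applied to \<open>F (p - 2)\<close>, \<open>F p\<close> and \<open>F (p - 1)\<close>.\<close>

lemma tot_diff_tot_diff:
  assumes F: "F \<in> tot_cochains K n"
  shows "tot_diff dv dh (Suc n) (tot_diff dv dh n F) = 0"
proof (rule ext)
  fix p
  have F_mem: "\<And>p. p \<le> n \<Longrightarrow> F p \<in> K p (n - p)" and F_0: "\<And>p. n < p \<Longrightarrow> F p = 0"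
    using F by (auto simp: tot_cochains_def)
  show "tot_diff dv dh (Suc n) (tot_diff dv dh n F) p = 0 p"
  proof (cases p)
    case 0
    then show ?thesis
      using dv_dv[OF F_mem[of 0]] by (simp add: tot_diff_def)
  next
    case (Suc r)
    show ?thesis
    proof (cases "r \<le> n")
      case True
      have hh: "dh r (Suc n - r) (if 1 \<le> r then dh (r - 1) (Suc n - r) (F (r - 1)) else 0) = 0"
        using F_mem[of "r - 1"] True dh_dh by (cases r) auto
      have vv: "dv (Suc r) (n - r) (if Suc r \<le> n then dv (Suc r) (n - Suc r) (F (Suc r)) else 0) = 0"
        using dv_dv[OF F_mem[of "Suc r"]] by (simp add: Suc_diff_Suc)
      have vh: "dh r (Suc n - r) (dv r (n - r) (F r)) + dv (Suc r) (n - r) (dh r (n - r) (F r)) = 0"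
        using dv_dh[OF F_mem[OF True]] True by (simp add: Suc_diff_le add.commute)
      have "tot_diff dv dh (Suc n) (tot_diff dv dh n F) p =
          dh r (Suc n - r) (if 1 \<le> r then dh (r - 1) (Suc n - r) (F (r - 1)) else 0)
          + dh r (Suc n - r) (dv r (n - r) (F r))
          + (dv (Suc r) (n - r) (dh r (n - r) (F r))
          + dv (Suc r) (n - r) (if Suc r \<le> n then dv (Suc r) (n - Suc r) (F (Suc r)) else 0))"
        using True Suc by (simp add: tot_diff_def dv_add dh_add Suc_diff_le)
      also have "\<dots> = 0"
        using hh vv vh by (simp add: algebra_simps)
      finally show ?thesis
        by simp
    next
      case False
      then show ?thesis
        using Suc dh_dh[OF F_mem[of n]] F_0[of "Suc n"] by (cases "r = Suc n") (auto simp: tot_diff_def)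
    qed
  qed
qed

sublocale tot: cochain_complex "tot_cochains K" "tot_diff dv dh"
proof
  show "tot_diff dv dh n F \<in> tot_cochains K (Suc n)" if "F \<in> tot_cochains K n" for n F
    using that by (rule tot_diff_mem)
qed (auto simp: tot_cochains_def zero_mem add_mem uminus_mem tot_diff_add tot_diff_tot_diff)

lemma tot_single_mem: "k \<le> n \<Longrightarrow> h \<in> K k (n - k) \<Longrightarrow> tot_single k h \<in> tot_cochains K n"
  by (auto simp: tot_cochains_def tot_single_def zero_mem)

lemma tot_diff_tot_single:
  "tot_diff dv dh n (tot_single n h) = tot_single n (dv n 0 h) + tot_single (Suc n) (dh n 0 h)"
  by (rule ext) (auto simp: tot_diff_def tot_single_def)

lemma tot_diff_tot_single_below: "p < k \<Longrightarrow> tot_diff dv dh n (tot_single k h) p = 0"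
  by (auto simp: tot_diff_def tot_single_def)

lemma tot_diff_lowest:
  assumes "k \<le> n" "\<forall>p<k. F p = 0"
  shows "tot_diff dv dh n F k = dv k (n - k) (F k)"
  using assms by (cases k) (auto simp: tot_diff_def)

lemma transpose: "double_complex (\<lambda>p q. K q p) (\<lambda>p q. dh q p) (\<lambda>p q. dv q p)"
  by unfold_locales
    (auto simp: zero_mem add_mem uminus_mem dv_mem dh_mem dv_add dh_add dv_dv dh_dh
      dv_dh[unfolded add.commute[of "dv _ _ _"]])

end

definition tot_reverse :: "nat \<Rightarrow> (nat \<Rightarrow> 'c::zero) \<Rightarrow> nat \<Rightarrow> 'c" where
  "tot_reverse n F = (\<lambda>p. if p \<le> n then F (n - p) else 0)"

lemma tot_reverse_mem:
  "F \<in> tot_cochains K n \<Longrightarrow> tot_reverse n F \<in> tot_cochains (\<lambda>p q. K q p) n"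
  by (auto simp: tot_cochains_def tot_reverse_def) (metis diff_diff_cancel diff_le_self)

lemma tot_reverse_reverse: "F \<in> tot_cochains K n \<Longrightarrow> tot_reverse n (tot_reverse n F) = F"
  by (rule ext) (auto simp: tot_cochains_def tot_reverse_def)

lemma tot_reverse_add: "tot_reverse n (F + G) = tot_reverse n F + tot_reverse n (G :: nat \<Rightarrow> 'c::monoid_add)"
  by (rule ext) (simp add: tot_reverse_def)

lemma tot_reverse_tot_diff:
  assumes "F \<in> tot_cochains K n"
  shows "tot_reverse (Suc n) (tot_diff dv dh n F) = tot_diff (\<lambda>p q. dh q p) (\<lambda>p q. dv q p) n (tot_reverse n F)"
proof (rule ext)
  fix p
  have "F p = 0" if "n < p" for p
    using assms that by (simp add: tot_cochains_def)
  then show "tot_reverse (Suc n) (tot_diff dv dh n F) p =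
      tot_diff (\<lambda>p q. dh q p) (\<lambda>p q. dv q p) n (tot_reverse n F) p"
    by (cases p; cases "p \<le> Suc n")
      (auto simp: tot_reverse_def tot_diff_def Suc_diff_le add.commute le_Suc_eq)
qed

context double_complex
begin

lemma cochain_map_tot_reverse:
  "cochain_map (tot_cochains K) (tot_diff dv dh)
     (tot_cochains (\<lambda>p q. K q p)) (tot_diff (\<lambda>p q. dh q p) (\<lambda>p q. dv q p)) tot_reverse"
proof -
  interpret T: double_complex "\<lambda>p q. K q p" "\<lambda>p q. dh q p" "\<lambda>p q. dv q p"
    by (rule transpose)
  show ?thesis
    by unfold_locales (simp_all add: tot_reverse_mem tot_reverse_add tot_reverse_tot_diff)
qed

lemma cohomology_transpose_iso:
  "cohomology (tot_cochains (\<lambda>p q. K q p)) (tot_diff (\<lambda>p q. dh q p) (\<lambda>p q. dv q p)) (+) 0 n \<cong> tot.H n"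
proof -
  interpret T: double_complex "\<lambda>p q. K q p" "\<lambda>p q. dh q p" "\<lambda>p q. dv q p"
    by (rule transpose)
  interpret rev: cochain_map "tot_cochains K" "tot_diff dv dh"
      "tot_cochains (\<lambda>p q. K q p)" "tot_diff (\<lambda>p q. dh q p) (\<lambda>p q. dv q p)" tot_reverse
    by (rule cochain_map_tot_reverse)
  interpret rev': cochain_map "tot_cochains (\<lambda>p q. K q p)" "tot_diff (\<lambda>p q. dh q p) (\<lambda>p q. dv q p)"
      "tot_cochains K" "tot_diff dv dh" tot_reverse
    by (rule T.cochain_map_tot_reverse)
  have "\<exists>x\<in>carrier (T.tot.Z n). y - tot_reverse n x \<in> tot.B n" if "y \<in> carrier (tot.Z n)" for y
    using that rev.map_cocycle tot.zero_coboundary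
    by (intro bexI[of _ "tot_reverse n y"]) (auto simp: tot.carrier_cocycles tot_reverse_reverse)
  moreover have "x \<in> T.tot.B n" if x: "x \<in> carrier (T.tot.Z n)" "tot_reverse n x \<in> tot.B n" for x
  proof -
    have "x \<in> tot_cochains (\<lambda>p q. K q p) n"
      using x(1) T.tot.carrier_cocycles by blast
    then show ?thesis
      using rev.map_coboundary[OF x(2)] tot_reverse_reverse by metis
  qed
  ultimately obtain \<psi> where "\<psi> \<in> iso (T.tot.H n) (tot.H n)"
    using rev'.cohomology_iso by blast
  then show ?thesis
    by (auto simp: is_iso_def)
qed

end

locale augmented_double_complex = double_complex K dv dh + E: cochain_complex E dE
  for K :: "nat \<Rightarrow> nat \<Rightarrow> 'c::ab_group_add set" and dv dh
    and E :: "nat \<Rightarrow> 'e::ab_group_add set" and dE +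
  fixes e :: "nat \<Rightarrow> 'e \<Rightarrow> 'c"
  assumes e_mem: "x \<in> E p \<Longrightarrow> e p x \<in> K p 0"
    and e_add: "x \<in> E p \<Longrightarrow> y \<in> E p \<Longrightarrow> e p (x + y) = e p x + e p y"
    and e_inj: "x \<in> E p \<Longrightarrow> e p x = 0 \<Longrightarrow> x = 0"
    and dv_e: "x \<in> E p \<Longrightarrow> dv p 0 (e p x) = 0"
    and dh_e: "x \<in> E p \<Longrightarrow> dh p 0 (e p x) = e (Suc p) (dE p x)"
    and column_exact_0: "F \<in> K p 0 \<Longrightarrow> dv p 0 F = 0 \<Longrightarrow> \<exists>x\<in>E p. F = e p x"
    and column_exact_Suc: "F \<in> K p (Suc q) \<Longrightarrow> dv p (Suc q) F = 0 \<Longrightarrow> \<exists>h\<in>K p q. F = dv p q h"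
begin

sublocale edge: cochain_map E dE "tot_cochains K" "tot_diff dv dh" "\<lambda>n x. tot_single n (e n x)"
  by unfold_locales (simp_all add: tot_single_mem e_mem e_add tot_single_add tot_diff_tot_single dv_e dh_e)

lemma e_diff: "x \<in> E p \<Longrightarrow> y \<in> E p \<Longrightarrow> e p (x - y) = e p x - e p y"
  using e_add[OF E.diff_mem, of x p y y] by (simp add: algebra_simps)

text \<open>Staircase argument: column exactness lets one subtract coboundaries from a cochain of
  total degree \<open>Suc m\<close> to kill its components \<open>0, 1, \<dots>\<close> one by one.\<close>

lemma staircase_step:
  assumes F: "F \<in> tot_cochains K (Suc m)" and dF: "\<forall>p\<le>m. tot_diff dv dh (Suc m) F p = 0"
    and H: "H \<in> tot_cochains K m" "\<forall>p<k. F p = tot_diff dv dh m H p" and k: "k \<le> m"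
  obtains h where "h \<in> K k (m - k)" "\<forall>p<Suc k. F p = tot_diff dv dh m (H + tot_single k h) p"
proof -
  define F' where "F' = F - tot_diff dv dh m H"
  have "F' \<in> tot_cochains K (Suc m)"
    unfolding F'_def using tot.diff_mem[OF F tot.d_mem[OF H(1)]] .
  then have "F' k \<in> K k (Suc m - k)"
    using k by (simp add: tot_cochains_def)
  then have F'_k: "F' k \<in> K k (Suc (m - k))"
    using k by (simp add: Suc_diff_le)
  have F'_below: "\<forall>p<k. F' p = 0"
    using H(2) by (simp add: F'_def)
  have "tot_diff dv dh (Suc m) F' = tot_diff dv dh (Suc m) F"
    using tot.d_diff[OF F tot.d_mem[OF H(1)]] tot.d_d[OF H(1)] by (simp add: F'_def)
  then have "dv k (Suc (m - k)) (F' k) = 0"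
    using tot_diff_lowest[of k "Suc m" F'] F'_below dF k by (simp add: Suc_diff_le)
  then obtain h where h: "h \<in> K k (m - k)" "F' k = dv k (m - k) h"
    using column_exact_Suc[OF F'_k] by blast
  have d_single: "tot_diff dv dh m (tot_single k h) p = (if p = k then dv k (m - k) h else 0)"
    if "p \<le> k" for p
    using that k tot_diff_lowest[of k m "tot_single k h"] tot_diff_tot_single_below[of p k]
    by (auto simp: tot_single_def)
  have "F p = tot_diff dv dh m (H + tot_single k h) p" if "p < Suc k" for p
    using that H(2) h(2) d_single[of p] by (auto simp: F'_def tot_diff_add diff_eq_eq add.commute)
  then show ?thesis
    using that h(1) by blast
qed

lemma staircase:
  assumes F: "F \<in> tot_cochains K (Suc m)" and dF: "\<forall>p\<le>m. tot_diff dv dh (Suc m) F p = 0"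
  shows "k \<le> Suc m \<Longrightarrow> \<exists>H \<in> tot_cochains K m. \<forall>p<k. F p = tot_diff dv dh m H p"
proof (induction k)
  case 0
  show ?case
    using tot.zero_mem by blast
next
  case (Suc k)
  then obtain H where H: "H \<in> tot_cochains K m" "\<forall>p<k. F p = tot_diff dv dh m H p"
    by auto
  moreover have k: "k \<le> m"
    using Suc.prems by simp
  ultimately obtain h where "h \<in> K k (m - k)" "\<forall>p<Suc k. F p = tot_diff dv dh m (H + tot_single k h) p"
    using staircase_step[OF F dF] by blast
  then show ?case
    using tot.add_mem[OF H(1) tot_single_mem[OF k]] by blast
qed

lemma cohomologous_to_bottom_row:
  assumes F: "F \<in> tot_cochains K n" and dF: "\<forall>p<n. tot_diff dv dh n F p = 0"
  obtains h where "h \<in> K n 0" "F - tot_single n h \<in> tot.B n"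
    and "tot_diff dv dh n (tot_single n h) = tot_diff dv dh n F"
proof (cases n)
  case 0
  then show ?thesis
    using that[of "F 0"] F tot_single_concentrated[OF F] tot.zero_coboundary
    by (simp add: tot_cochains_def)
next
  case (Suc m)
  then have F: "F \<in> tot_cochains K (Suc m)"
    using F by simp
  obtain H where H: "H \<in> tot_cochains K m" "\<forall>p<n. F p = tot_diff dv dh m H p"
    using staircase[OF F, of n] dF Suc by auto
  define F' where "F' = F - tot_diff dv dh m H"
  have F': "F' \<in> tot_cochains K n"
    unfolding F'_def using tot.diff_mem[OF F tot.d_mem[OF H(1)]] Suc by simp
  have "\<forall>p<n. F' p = 0"
    using H(2) by (simp add: F'_def)
  then have "F' = tot_single n (F' n)"
    using tot_single_concentrated[OF F'] by blast
  moreover have "F - F' \<in> tot.B n"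
    using H(1) Suc by (auto simp: F'_def coboundaries_def)
  moreover have "tot_diff dv dh n F' = tot_diff dv dh n F"
    using tot.d_diff[OF F tot.d_mem[OF H(1)]] tot.d_d[OF H(1)] Suc by (simp add: F'_def)
  moreover have "F' n \<in> K n (n - n)"
    using F' unfolding tot_cochains_def by blast
  ultimately show ?thesis
    using that[of "F' n"] by simp
qed

lemma edge_surj:
  assumes F: "F \<in> carrier (tot.Z n)"
  shows "\<exists>x \<in> carrier (E.Z n). F - tot_single n (e n x) \<in> tot.B n"
proof -
  have "F \<in> tot_cochains K n" "tot_diff dv dh n F = 0"
    using F tot.carrier_cocycles by auto
  then obtain h where h: "h \<in> K n 0" "F - tot_single n h \<in> tot.B n"
    and dh: "tot_single n (dv n 0 h) + tot_single (Suc n) (dh n 0 h) = 0"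
    using cohomologous_to_bottom_row[of F n] by (auto simp: tot_diff_tot_single)
  have "dv n 0 h = 0" "dh n 0 h = 0"
    using fun_cong[OF dh, of n] fun_cong[OF dh, of "Suc n"] by (simp_all add: tot_single_def)
  moreover obtain x where x: "x \<in> E n" "h = e n x"
    using column_exact_0[OF h(1)] \<open>dv n 0 h = 0\<close> by blast
  ultimately have "e (Suc n) (dE n x) = 0"
    using dh_e by simp
  then have "x \<in> carrier (E.Z n)"
    using e_inj[OF E.d_mem[OF x(1)]] x(1) by (simp add: E.carrier_cocycles)
  then show ?thesis
    using h(2) x(2) by blast
qed

lemma edge_inj:
  assumes x: "x \<in> carrier (E.Z n)" and cob: "tot_single n (e n x) \<in> tot.B n"
  shows "x \<in> E.B n"
proof (cases n)
  case 0
  then have "x \<in> E n" "e n x = 0"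
    using x cob by (auto simp: E.carrier_cocycles coboundaries_def)
  then show ?thesis
    using e_inj 0 by (simp add: coboundaries_def)
next
  case (Suc m)
  have x: "x \<in> E (Suc m)"
    using x Suc E.carrier_cocycles by auto
  obtain G where G: "G \<in> tot_cochains K m" "tot_diff dv dh m G = tot_single (Suc m) (e (Suc m) x)"
    using cob Suc by (auto simp: coboundaries_def)
  moreover have "\<forall>p<m. tot_diff dv dh m G p = 0"
    using G(2) by (simp add: tot_single_def)
  ultimately obtain h where h: "h \<in> K m 0"
    and "tot_diff dv dh m (tot_single m h) = tot_single (Suc m) (e (Suc m) x)"
    using cohomologous_to_bottom_row by metis
  then have dh: "tot_single m (dv m 0 h) + tot_single (Suc m) (dh m 0 h) = tot_single (Suc m) (e (Suc m) x)"
    by (simp add: tot_diff_tot_single)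
  have "dv m 0 h = 0" "dh m 0 h = e (Suc m) x"
    using fun_cong[OF dh, of m] fun_cong[OF dh, of "Suc m"] by (simp_all add: tot_single_def)
  moreover obtain y where y: "y \<in> E m" "h = e m y"
    using column_exact_0[OF h] \<open>dv m 0 h = 0\<close> by blast
  ultimately have "e (Suc m) (dE m y - x) = 0"
    using dh_e e_diff[OF E.d_mem[OF y(1)] x] by simp
  then have "dE m y = x"
    using e_inj[OF E.diff_mem[OF E.d_mem[OF y(1)] x]] by simp
  then show ?thesis
    using y(1) Suc by (auto simp: coboundaries_def)
qed

theorem edge_cohomology_iso:
  "\<exists>\<psi>. \<psi> \<in> iso (E.H n) (tot.H n) \<and>
     (\<forall>x \<in> carrier (E.Z n). \<psi> (E.cls n x) = tot.cls n (tot_single n (e n x)))"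
  using edge.cohomology_iso[OF edge_surj edge_inj] by simp

corollary edge_cohomology_is_iso: "E.H n \<cong> tot.H n"
  using edge_cohomology_iso by (auto simp: is_iso_def)

end

section \<open>Homogeneous cochains\<close>

declare sum.atMost_Suc [simp del]

definition alt_sign :: "nat \<Rightarrow> 'a::group_add \<Rightarrow> 'a" where
  "alt_sign i a = (if even i then a else - a)"

lemma alt_sign_0 [simp]: "alt_sign 0 a = a"
  by (simp add: alt_sign_def)

lemma alt_sign_Suc: "alt_sign (Suc i) a = - alt_sign i a"
  by (simp add: alt_sign_def)

lemma alt_sign_commute: "alt_sign i (alt_sign j a) = alt_sign j (alt_sign i a)"
  by (simp add: alt_sign_def)

lemma alt_sign_alt_sign [simp]: "alt_sign i (alt_sign i a) = a"
  by (simp add: alt_sign_def)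

lemma alt_sign_uminus: "alt_sign i (- a) = - alt_sign i (a :: 'a::ab_group_add)"
  by (simp add: alt_sign_def)

lemma alt_sign_add: "alt_sign i (a + b) = alt_sign i a + alt_sign i (b :: 'a::ab_group_add)"
  by (simp add: alt_sign_def)

lemma alt_sign_sum: "alt_sign i (\<Sum>j\<in>A. f j) = (\<Sum>j\<in>A. alt_sign i (f j :: 'a::ab_group_add))"
  by (simp add: alt_sign_def sum_negf)

lemma gc_tuples_iff: "x \<in> gc_tuples n \<longleftrightarrow> (\<forall>k>n. x k = undefined)"
  by (auto simp: gc_tuples_def PiE_def extensional_def)

lemma gc_face_mem [simp]: "gc_face n i x \<in> gc_tuples n"
  by (simp add: gc_face_def gc_tuples_def)

lemma gc_ltrans_mem [simp]: "gc_ltrans g n x \<in> gc_tuples n"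
  by (simp add: gc_ltrans_def gc_tuples_def)

lemma gc_face_gc_ltrans: "gc_face n i (gc_ltrans g (Suc n) x) = gc_ltrans g n (gc_face n i x)"
  by (rule ext) (auto simp: gc_face_def gc_ltrans_def)

lemma gc_ltrans_gc_ltrans: "gc_ltrans g n (gc_ltrans h n x) = gc_ltrans (g + h) n x"
  by (rule ext) (auto simp: gc_ltrans_def add.assoc)

lemma gc_face_gc_face:
  "j < i \<Longrightarrow> gc_face n j (gc_face (Suc n) i x) = gc_face n (i - 1) (gc_face (Suc n) j x)"
  by (rule ext) (auto simp: gc_face_def)

text \<open>The terms with \<open>j < i\<close> cancel against those with \<open>i \<le> j\<close> via \<open>(i, j) \<mapsto> (j + 1, i)\<close>.\<close>

lemma alternating_face_sum_twice:
  fixes f :: "(nat \<Rightarrow> 'g) \<Rightarrow> 'a::ab_group_add"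
  shows "(\<Sum>i\<le>Suc (Suc n). alt_sign i (\<Sum>j\<le>Suc n. alt_sign j (f (gc_face n j (gc_face (Suc n) i x))))) = 0"
    (is "?L = 0")
proof -
  define g where "g i j = alt_sign i (alt_sign j (f (gc_face n j (gc_face (Suc n) i x))))" for i j
  define P where "P = {..Suc (Suc n)} \<times> {..Suc n}"
  define P1 where "P1 = {ij \<in> P. snd ij < fst ij}"
  define P2 where "P2 = {ij \<in> P. \<not> snd ij < fst ij}"
  have "?L = (\<Sum>(i,j)\<in>P. g i j)"
    unfolding P_def g_def alt_sign_sum by (rule sum.cartesian_product)
  also have "\<dots> = (\<Sum>(i,j)\<in>P1. g i j) + (\<Sum>(i,j)\<in>P2. g i j)"
  proof -
    have "P = P1 \<union> P2" "P1 \<inter> P2 = {}" "finite P1" "finite P2"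
      unfolding P1_def P2_def P_def by auto
    then show ?thesis
      by (simp add: sum.union_disjoint)
  qed
  also have "(\<Sum>(i,j)\<in>P1. g i j) = (\<Sum>(i,j)\<in>P2. g (Suc j) i)"
    by (rule sum.reindex_bij_witness[of _ "\<lambda>(i,j). (Suc j, i)" "\<lambda>(i,j). (j, i - 1)"])
      (auto simp: P1_def P2_def P_def)
  also have "\<dots> = (\<Sum>(i,j)\<in>P2. - g i j)"
  proof (rule sum.cong[OF refl], clarify)
    fix i j assume "(i, j) \<in> P2"
    then have "gc_face n i (gc_face (Suc n) (Suc j) x) = gc_face n j (gc_face (Suc n) i x)"
      using gc_face_gc_face[of i "Suc j" n x] by (simp add: P2_def)
    then show "g (Suc j) i = - g i j"
      by (simp add: g_def alt_sign_Suc alt_sign_commute[of i] alt_sign_def)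
  qed
  finally show ?thesis
    by (simp add: split_def sum_negf)
qed

lemma gc_d_eq: "gc_d n f = (\<lambda>x. if x \<in> gc_tuples (Suc n)
    then (\<Sum>i\<le>Suc n. alt_sign i (f (gc_face n i x))) else 0)"
  unfolding gc_d_def alt_sign_def ..

lemma d_h_eq: "d_h p q f = (\<lambda>x y. if x \<in> gc_tuples (Suc p) \<and> y \<in> gc_tuples q
    then (\<Sum>i\<le>Suc p. alt_sign i (f (gc_face p i x) y)) else 0)"
  unfolding d_h_def alt_sign_def ..

lemma d_v_eq: "d_v p q f = (\<lambda>x y. if x \<in> gc_tuples p \<and> y \<in> gc_tuples (Suc q)
    then alt_sign p (\<Sum>i\<le>Suc q. alt_sign i (f x (gc_face q i y))) else 0)"
  unfolding d_v_def alt_sign_def Let_def ..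

lemma gc_d_add: "gc_d n (f + g) = gc_d n f + gc_d n g"
  by (rule ext) (simp add: gc_d_eq alt_sign_add sum.distrib)

lemma d_h_add: "d_h p q (f + g) = d_h p q f + d_h p q g"
  by (rule ext)+ (simp add: d_h_eq alt_sign_add sum.distrib)

lemma d_v_add: "d_v p q (f + g) = d_v p q f + d_v p q g"
  by (rule ext)+ (simp add: d_v_eq alt_sign_add sum.distrib)

lemma gc_d_gc_d: "gc_d (Suc n) (gc_d n f) = 0"
  by (rule ext) (simp add: gc_d_eq alternating_face_sum_twice)

lemma d_h_d_h: "d_h (Suc p) q (d_h p q f) = 0"
  by (rule ext)+ (simp add: d_h_eq alternating_face_sum_twice[where f = "\<lambda>x. f x _"])

lemma d_v_d_v: "d_v p (Suc q) (d_v p q f) = 0"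
  by (rule ext)+
    (simp add: d_v_eq alt_sign_sum[symmetric] alt_sign_commute[of _ p] alternating_face_sum_twice)

lemma d_v_d_h: "d_v (Suc p) q (d_h p q f) + d_h p (Suc q) (d_v p q f) = 0"
proof (rule ext)+
  fix x y
  let ?f = "\<lambda>i j. alt_sign i (alt_sign j (f (gc_face p i x) (gc_face q j y)))"
  have "d_h p (Suc q) (d_v p q f) x y = alt_sign p (\<Sum>i\<le>Suc p. \<Sum>j\<le>Suc q. ?f i j)"
    if "x \<in> gc_tuples (Suc p)" "y \<in> gc_tuples (Suc q)"
    using that by (simp add: d_v_eq d_h_eq alt_sign_sum alt_sign_commute[of _ p])
  moreover have "d_v (Suc p) q (d_h p q f) x y = - alt_sign p (\<Sum>j\<le>Suc q. \<Sum>i\<le>Suc p. ?f i j)"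
    if "x \<in> gc_tuples (Suc p)" "y \<in> gc_tuples (Suc q)"
    using that
    by (simp add: d_v_eq d_h_eq alt_sign_Suc alt_sign_sum alt_sign_uminus sum_negf alt_sign_commute)
  ultimately show "(d_v (Suc p) q (d_h p q f) + d_h p (Suc q) (d_v p q f)) x y = 0 x y"
    by (auto simp: d_v_eq d_h_eq sum.swap[of _ "{..Suc q}"])
qed

section \<open>Locally continuous bicochains\<close>

lemma continuous_map_group_add:
  fixes f g :: "'x \<Rightarrow> 'b::topological_monoid_add"
  shows "continuous_map X euclidean f \<Longrightarrow> continuous_map X euclidean g \<Longrightarrow>
    continuous_map X euclidean (\<lambda>x. f x + g x)"
  by (simp add: continuous_map_atin tendsto_add)

lemma continuous_map_group_uminus:
  fixes f :: "'x \<Rightarrow> 'b::topological_group_add"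
  shows "continuous_map X euclidean f \<Longrightarrow> continuous_map X euclidean (\<lambda>x. - f x)"
  by (simp add: continuous_map_atin tendsto_minus)

lemma continuous_map_group_sum:
  fixes f :: "'i \<Rightarrow> 'x \<Rightarrow> 'b::topological_comm_monoid_add"
  shows "finite I \<Longrightarrow> (\<And>i. i \<in> I \<Longrightarrow> continuous_map X euclidean (f i)) \<Longrightarrow>
    continuous_map X euclidean (\<lambda>x. \<Sum>i\<in>I. f i x)"
  by (simp add: continuous_map_atin tendsto_sum)

lemma continuous_map_alt_sign:
  fixes f :: "'x \<Rightarrow> 'b::topological_group_add"
  shows "continuous_map X euclidean f \<Longrightarrow> continuous_map X euclidean (\<lambda>x. alt_sign i (f x))"
  by (cases "even i") (simp_all add: alt_sign_def continuous_map_group_uminus)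

lemma continuous_map_compose':
  "continuous_map X Y m \<Longrightarrow> continuous_map Y Z f \<Longrightarrow> continuous_map X Z (\<lambda>z. f (m z))"
  using continuous_map_compose[of X Y m Z f] by (simp add: o_def)

lemma topspace_gc_tuple_top [simp]: "topspace (gc_tuple_top n) = gc_tuples n"
  by (simp add: gc_tuple_top_def gc_tuples_def)

lemma continuous_map_gc_component: "k \<le> n \<Longrightarrow> continuous_map (gc_tuple_top n) euclidean (\<lambda>x. x k)"
  unfolding gc_tuple_top_def using continuous_map_product_projection[of k "{..n}" "\<lambda>_. euclidean"]
  by simp

lemma continuous_map_into_gc_tuple_top:
  assumes "\<And>x. x \<in> topspace X \<Longrightarrow> f x \<in> gc_tuples n"
    and "\<And>k. k \<le> n \<Longrightarrow> continuous_map X euclidean (\<lambda>x. f x k)"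
  shows "continuous_map X (gc_tuple_top n) f"
  unfolding gc_tuple_top_def continuous_map_componentwise
  using assms by (auto simp: gc_tuples_def PiE_def)

lemma continuous_map_gc_face: "continuous_map (gc_tuple_top (Suc n)) (gc_tuple_top n) (gc_face n i)"
proof (rule continuous_map_into_gc_tuple_top)
  fix k assume "k \<le> n"
  then show "continuous_map (gc_tuple_top (Suc n)) euclidean (\<lambda>x. gc_face n i x k)"
  proof (cases "k < i")
    case True
    then show ?thesis
      using continuous_map_gc_component[of k "Suc n"] \<open>k \<le> n\<close> by (simp add: gc_face_def)
  next
    case False
    then show ?thesis
      using continuous_map_gc_component[of "Suc k" "Suc n"] \<open>k \<le> n\<close> by (simp add: gc_face_def)
  qed
qed simp

lemma continuous_map_gc_ltrans:
  fixes u :: "'x \<Rightarrow> 'g::topological_group_add"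
  assumes "continuous_map X euclidean u" "continuous_map X (gc_tuple_top n) v"
  shows "continuous_map X (gc_tuple_top n) (\<lambda>z. gc_ltrans (u z) n (v z))"
proof (rule continuous_map_into_gc_tuple_top)
  fix k assume k: "k \<le> n"
  have "continuous_map X euclidean (\<lambda>z. u z + v z k)"
    by (rule continuous_map_group_add[OF assms(1)
          continuous_map_compose'[OF assms(2) continuous_map_gc_component[OF k]]])
  then show "continuous_map X euclidean (\<lambda>z. gc_ltrans (u z) n (v z) k)"
    using k by (simp add: gc_ltrans_def)
qed simp

lemma gc_Gamma_subset: "gc_Gamma U q \<subseteq> gc_tuples q"
  by (auto simp: gc_Gamma_def)

lemma gc_Gamma_mono: "U \<subseteq> V \<Longrightarrow> gc_Gamma U q \<subseteq> gc_Gamma V q"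
  by (auto simp: gc_Gamma_def)

lemma gc_Gamma_0 [simp]: "gc_Gamma U 0 = gc_tuples 0"
  by (simp add: gc_Gamma_def)

lemma gc_face_gc_Gamma:
  assumes "y \<in> gc_Gamma U (Suc q)"
  shows "gc_face q i y \<in> gc_Gamma U q"
proof (cases q)
  case (Suc r)
  have "\<And>a b. a \<le> Suc q \<Longrightarrow> b \<le> Suc q \<Longrightarrow> - y a + y b \<in> U"
    using assms by (auto simp: gc_Gamma_def)
  then show ?thesis
    using Suc by (auto simp: gc_Gamma_def gc_face_def gc_tuples_def)
qed simp

lemma gc_ltrans_gc_Gamma: "y \<in> gc_Gamma U q \<Longrightarrow> gc_ltrans g q y \<in> gc_Gamma U q"
  by (auto simp: gc_Gamma_def gc_ltrans_def gc_tuples_def minus_add add.assoc[symmetric])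

lemma gc_identity_nbhd_Int: "gc_identity_nbhd U \<Longrightarrow> gc_identity_nbhd V \<Longrightarrow> gc_identity_nbhd (U \<inter> V)"
  unfolding gc_identity_nbhd_def by (metis Int_mono open_Int IntI)

lemma gc_identity_nbhd_UNIV: "gc_identity_nbhd UNIV"
  unfolding gc_identity_nbhd_def by auto

abbreviation Gamma_top :: "'g::topological_group_add set \<Rightarrow> nat \<Rightarrow> (nat \<Rightarrow> 'g) topology" where
  "Gamma_top U n \<equiv> subtopology (gc_tuple_top n) (gc_Gamma U n)"

abbreviation bi_Gamma_top ::
  "nat \<Rightarrow> 'g::topological_group_add set \<Rightarrow> nat \<Rightarrow> ((nat \<Rightarrow> 'g) \<times> (nat \<Rightarrow> 'g)) topology" where
  "bi_Gamma_top p U q \<equiv>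
     subtopology (prod_topology (gc_tuple_top p) (gc_tuple_top q)) (gc_tuples p \<times> gc_Gamma U q)"

lemma continuous_map_Gamma_top_mono:
  "V \<subseteq> U \<Longrightarrow> continuous_map (Gamma_top U n) X f \<Longrightarrow> continuous_map (Gamma_top V n) X f"
  using continuous_map_from_subtopology_mono gc_Gamma_mono by blast

lemma continuous_map_bi_Gamma_top_mono:
  "V \<subseteq> U \<Longrightarrow> continuous_map (bi_Gamma_top p U q) X f \<Longrightarrow> continuous_map (bi_Gamma_top p V q) X f"
proof -
  assume "V \<subseteq> U" "continuous_map (bi_Gamma_top p U q) X f"
  moreover have "gc_tuples p \<times> gc_Gamma V q \<subseteq> gc_tuples p \<times> gc_Gamma U q"
    using gc_Gamma_mono[OF \<open>V \<subseteq> U\<close>] by blast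
  ultimately show ?thesis
    using continuous_map_from_subtopology_mono by blast
qed

lemma continuous_map_bi_Gamma_fst: "continuous_map (bi_Gamma_top p U q) (gc_tuple_top p) fst"
  by (rule continuous_map_from_subtopology) (rule continuous_map_fst)

lemma continuous_map_bi_Gamma_snd: "continuous_map (bi_Gamma_top p U q) (gc_tuple_top q) snd"
  by (rule continuous_map_from_subtopology) (rule continuous_map_snd)

lemma continuous_map_into_bi_Gamma_top:
  assumes "continuous_map X (gc_tuple_top p) (\<lambda>z. fst (m z))"
    and "continuous_map X (gc_tuple_top q) (\<lambda>z. snd (m z))"
    and "\<And>z. z \<in> topspace X \<Longrightarrow> m z \<in> gc_tuples p \<times> gc_Gamma U q"
  shows "continuous_map X (bi_Gamma_top p U q) m"
proof (rule continuous_map_into_subtopology)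
  show "continuous_map X (prod_topology (gc_tuple_top p) (gc_tuple_top q)) m"
    using continuous_map_pairedI[OF assms(1,2)] by simp
  show "m \<in> topspace X \<rightarrow> gc_tuples p \<times> gc_Gamma U q"
    using assms(3) by blast
qed

definition continuous_on_Gamma ::
  "nat \<Rightarrow> nat \<Rightarrow> 'g::topological_group_add set \<Rightarrow> ('g, 'a::topological_space) bicochain \<Rightarrow> bool" where
  "continuous_on_Gamma p q U f \<longleftrightarrow> continuous_map (bi_Gamma_top p U q) euclidean (\<lambda>z. f (fst z) (snd z))"

lemma Alc_iff: "f \<in> Alc act p q \<longleftrightarrow>
    (\<forall>x y. \<not> (x \<in> gc_tuples p \<and> y \<in> gc_tuples q) \<longrightarrow> f x y = 0) \<and>
    (\<exists>U. gc_identity_nbhd U \<and> continuous_on_Gamma p q U f)"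
  by (simp add: Alc_def continuous_on_Gamma_def case_prod_beta')

lemma continuous_on_Gamma_mono: "V \<subseteq> U \<Longrightarrow> continuous_on_Gamma p q U f \<Longrightarrow> continuous_on_Gamma p q V f"
  unfolding continuous_on_Gamma_def by (rule continuous_map_bi_Gamma_top_mono)

lemma continuous_on_Gamma_d_v:
  fixes f :: "('g::topological_group_add, 'a::topological_ab_group_add) bicochain"
  assumes "continuous_on_Gamma p q U f"
  shows "continuous_on_Gamma p (Suc q) U (d_v p q f)"
proof -
  have "continuous_map (bi_Gamma_top p U (Suc q)) (bi_Gamma_top p U q) (\<lambda>z. (fst z, gc_face q i (snd z)))" for i
    by (rule continuous_map_into_bi_Gamma_top)
      (auto intro: continuous_map_bi_Gamma_fst gc_face_gc_Gamma
        continuous_map_compose'[OF continuous_map_bi_Gamma_snd continuous_map_gc_face])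
  then have "continuous_map (bi_Gamma_top p U (Suc q)) euclidean (\<lambda>z. f (fst z) (gc_face q i (snd z)))" for i
    using continuous_map_compose'[OF _ assms[unfolded continuous_on_Gamma_def]] by fastforce
  then have "continuous_map (bi_Gamma_top p U (Suc q)) euclidean
      (\<lambda>z. alt_sign p (\<Sum>i\<le>Suc q. alt_sign i (f (fst z) (gc_face q i (snd z)))))"
    by (intro continuous_map_alt_sign continuous_map_group_sum) auto
  then show ?thesis
    unfolding continuous_on_Gamma_def
    by (rule continuous_map_eq) (use gc_Gamma_subset in \<open>auto simp: d_v_eq\<close>)
qed

lemma continuous_on_Gamma_d_h:
  fixes f :: "('g::topological_group_add, 'a::topological_ab_group_add) bicochain"
  assumes "continuous_on_Gamma p q U f"
  shows "continuous_on_Gamma (Suc p) q U (d_h p q f)"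
proof -
  have "continuous_map (bi_Gamma_top (Suc p) U q) (bi_Gamma_top p U q) (\<lambda>z. (gc_face p i (fst z), snd z))" for i
    by (rule continuous_map_into_bi_Gamma_top)
      (auto intro: continuous_map_bi_Gamma_snd
        continuous_map_compose'[OF continuous_map_bi_Gamma_fst continuous_map_gc_face])
  then have "continuous_map (bi_Gamma_top (Suc p) U q) euclidean (\<lambda>z. f (gc_face p i (fst z)) (snd z))" for i
    using continuous_map_compose'[OF _ assms[unfolded continuous_on_Gamma_def]] by fastforce
  then have "continuous_map (bi_Gamma_top (Suc p) U q) euclidean
      (\<lambda>z. \<Sum>i\<le>Suc p. alt_sign i (f (gc_face p i (fst z)) (snd z)))"
    by (intro continuous_map_alt_sign continuous_map_group_sum) auto
  then show ?thesis
    unfolding continuous_on_Gamma_def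
    by (rule continuous_map_eq) (use gc_Gamma_subset in \<open>auto simp: d_h_eq\<close>)
qed

lemma Alc_zero: "0 \<in> Alc act p q"
  by (auto simp: Alc_iff continuous_on_Gamma_def gc_identity_nbhd_UNIV intro!: exI[of _ UNIV])

lemma Alc_add:
  assumes "f \<in> Alc act p q" "g \<in> Alc act p q"
  shows "f + g \<in> Alc act p q"
proof -
  obtain U V where U: "gc_identity_nbhd U" "continuous_on_Gamma p q U f"
    and V: "gc_identity_nbhd V" "continuous_on_Gamma p q V g"
    using assms unfolding Alc_iff by blast
  have "continuous_on_Gamma p q (U \<inter> V) (f + g)"
    using continuous_on_Gamma_mono[OF _ U(2), of "U \<inter> V"] continuous_on_Gamma_mono[OF _ V(2), of "U \<inter> V"]
    by (simp add: continuous_on_Gamma_def continuous_map_group_add)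
  then show ?thesis
    using assms gc_identity_nbhd_Int[OF U(1) V(1)] unfolding Alc_iff by auto
qed

lemma Alc_uminus: "f \<in> Alc act p q \<Longrightarrow> - f \<in> Alc act p q"
  by (fastforce simp: Alc_iff continuous_on_Gamma_def intro: continuous_map_group_uminus)

lemma Alc_d_v:
  assumes "f \<in> Alc act p q"
  shows "d_v p q f \<in> Alc act p (Suc q)"
proof -
  have "\<forall>x y. \<not> (x \<in> gc_tuples p \<and> y \<in> gc_tuples (Suc q)) \<longrightarrow> d_v p q f x y = 0"
    by (simp add: d_v_def)
  then show ?thesis
    using assms continuous_on_Gamma_d_v unfolding Alc_iff by blast
qed

lemma Alc_d_h:
  assumes "f \<in> Alc act p q"
  shows "d_h p q f \<in> Alc act (Suc p) q"
proof -
  have "\<forall>x y. \<not> (x \<in> gc_tuples (Suc p) \<and> y \<in> gc_tuples q) \<longrightarrow> d_h p q f x y = 0"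
    by (simp add: d_h_def)
  then show ?thesis
    using assms continuous_on_Gamma_d_h unfolding Alc_iff by blast
qed

lemma continuous_map_gc_d:
  fixes f :: "(nat \<Rightarrow> 'g::topological_group_add) \<Rightarrow> 'a::topological_ab_group_add"
  assumes "continuous_map (subtopology (gc_tuple_top n) S) euclidean f"
    and "\<And>x i. x \<in> T \<Longrightarrow> gc_face n i x \<in> S" and "T \<subseteq> gc_tuples (Suc n)"
  shows "continuous_map (subtopology (gc_tuple_top (Suc n)) T) euclidean (gc_d n f)"
proof -
  have "continuous_map (subtopology (gc_tuple_top (Suc n)) T) (subtopology (gc_tuple_top n) S) (gc_face n i)" for i
    using assms(2)
    by (intro continuous_map_into_subtopology continuous_map_from_subtopology continuous_map_gc_face) auto
  then have "continuous_map (subtopology (gc_tuple_top (Suc n)) T) euclidean (\<lambda>x. f (gc_face n i x))" for i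
    using continuous_map_compose'[OF _ assms(1)] by blast
  then have "continuous_map (subtopology (gc_tuple_top (Suc n)) T) euclidean
      (\<lambda>x. \<Sum>i\<le>Suc n. alt_sign i (f (gc_face n i x)))"
    by (intro continuous_map_group_sum continuous_map_alt_sign) auto
  then show ?thesis
    by (rule continuous_map_eq) (use assms(3) in \<open>auto simp: gc_d_eq\<close>)
qed

section \<open>Augmentations and the row contraction\<close>

definition aug_row :: "nat \<Rightarrow> ((nat \<Rightarrow> 'g) \<Rightarrow> 'a::ab_group_add) \<Rightarrow> ('g, 'a) bicochain" where
  "aug_row q f = (\<lambda>x y. if x \<in> gc_tuples 0 \<and> y \<in> gc_tuples q then f y else 0)"

lemma aug_add: "aug p (f + g) = aug p f + aug p g"
  by (rule ext)+ (simp add: aug_def)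

lemma aug_row_add: "aug_row q (f + g) = aug_row q f + aug_row q g"
  by (rule ext)+ (simp add: aug_row_def)

lemma gc_tuples_nonempty: "gc_tuples n \<noteq> {}"
  by (simp add: gc_tuples_def PiE_eq_empty_iff)

lemma aug_eq_0:
  fixes h :: "(nat \<Rightarrow> 'g) \<Rightarrow> 'a::ab_group_add"
  assumes "\<forall>x. x \<notin> gc_tuples p \<longrightarrow> h x = 0" "aug p h = 0"
  shows "h = 0"
proof -
  obtain y :: "nat \<Rightarrow> 'g" where "y \<in> gc_tuples 0"
    using gc_tuples_nonempty by blast
  then have "h x = 0" for x
    using assms(1) fun_cong[OF fun_cong[OF assms(2), of x], of y] by (auto simp: aug_def split: if_splits)
  then show ?thesis
    by (simp add: fun_eq_iff)
qed

lemma aug_row_eq_0: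
  fixes h :: "(nat \<Rightarrow> 'g) \<Rightarrow> 'a::ab_group_add"
  assumes "\<forall>y. y \<notin> gc_tuples q \<longrightarrow> h y = 0" "aug_row q h = 0"
  shows "h = 0"
proof -
  obtain x :: "nat \<Rightarrow> 'g" where "x \<in> gc_tuples 0"
    using gc_tuples_nonempty by blast
  then have "h y = 0" for y
    using assms(1) fun_cong[OF fun_cong[OF assms(2), of x], of y] by (auto simp: aug_row_def split: if_splits)
  then show ?thesis
    by (simp add: fun_eq_iff)
qed

lemma d_v_aug: "d_v p 0 (aug p h) = 0"
  by (rule ext)+ (simp add: d_v_eq aug_def sum.atMost_Suc alt_sign_def)

lemma d_h_aug: "d_h p 0 (aug p h) = aug (Suc p) (gc_d p h)"
  by (rule ext)+ (simp add: d_h_eq aug_def gc_d_eq)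

lemma d_h_aug_row: "d_h 0 q (aug_row q h) = 0"
  by (rule ext)+ (simp add: d_h_eq aug_row_def sum.atMost_Suc alt_sign_def)

lemma d_v_aug_row: "d_v 0 q (aug_row q h) = aug_row (Suc q) (gc_d q h)"
  by (rule ext)+ (simp add: d_v_eq aug_row_def gc_d_eq)

lemma column_exact_0:
  "column_exact act p \<Longrightarrow> f \<in> Alc act p 0 \<Longrightarrow> d_v p 0 f = 0 \<Longrightarrow> \<exists>h\<in>Ac act p. aug p h = f"
  by (auto simp: column_exact_def zero_fun_def)

lemma column_exact_Suc:
  "column_exact act p \<Longrightarrow> f \<in> Alc act p (Suc q) \<Longrightarrow> d_v p (Suc q) f = 0 \<Longrightarrow>
    \<exists>h\<in>Alc act p q. d_v p q h = f"
  by (auto simp: column_exact_def zero_fun_def)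

text \<open>\<open>(x, y) \<mapsto> x\<^sub>0 \<cdot> H (x\<^sub>0\<^sup>-\<^sup>1 x, x\<^sub>0\<^sup>-\<^sup>1 y)\<close>: an invariant bicochain agreeing with
  \<open>H\<close> where \<open>x\<^sub>0 = 0\<close>, and equal to \<open>H\<close> if \<open>H\<close> is already invariant.\<close>

definition invariantize ::
  "('g::group_add \<Rightarrow> 'a \<Rightarrow> 'a) \<Rightarrow> nat \<Rightarrow> nat \<Rightarrow> ('g, 'a::zero) bicochain \<Rightarrow> ('g, 'a) bicochain" where
  "invariantize act p q H = (\<lambda>x y. if x \<in> gc_tuples p \<and> y \<in> gc_tuples q
     then act (x 0) (H (gc_ltrans (- x 0) p x) (gc_ltrans (- x 0) q y)) else 0)"

definition gc_cons :: "nat \<Rightarrow> 'g \<Rightarrow> (nat \<Rightarrow> 'g) \<Rightarrow> nat \<Rightarrow> 'g" where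
  "gc_cons n c x = restrict (\<lambda>k. if k = 0 then c else x (k - 1)) {..Suc n}"

lemma gc_cons_mem [simp]: "gc_cons n c x \<in> gc_tuples (Suc n)"
  by (simp add: gc_cons_def gc_tuples_def)

lemma gc_face_0_gc_cons: "x \<in> gc_tuples (Suc n) \<Longrightarrow> gc_face (Suc n) 0 (gc_cons (Suc n) c x) = x"
  by (rule ext) (auto simp: gc_face_def gc_cons_def gc_tuples_iff)

lemma gc_face_Suc_gc_cons: "gc_face (Suc n) (Suc i) (gc_cons (Suc n) c x) = gc_cons n c (gc_face n i x)"
  by (rule ext) (auto simp: gc_face_def gc_cons_def)

lemma gc_cons_gc_ltrans: "gc_cons n (g + c) (gc_ltrans g n x) = gc_ltrans g (Suc n) (gc_cons n c x)"
  by (rule ext) (auto simp: gc_cons_def gc_ltrans_def)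

text \<open>The contracting homotopy of the rows: prepend the first entry of \<open>y\<close> to \<open>x\<close>.\<close>

definition row_cone :: "nat \<Rightarrow> nat \<Rightarrow> ('g, 'a::zero) bicochain \<Rightarrow> ('g, 'a) bicochain" where
  "row_cone p q F = (\<lambda>x y. if x \<in> gc_tuples p \<and> y \<in> gc_tuples q then F (gc_cons p (y 0) x) y else 0)"

lemma d_h_row_cone:
  assumes dF: "d_h (Suc p) q F = 0" and F0: "\<forall>x y. \<not> (x \<in> gc_tuples (Suc p) \<and> y \<in> gc_tuples q) \<longrightarrow> F x y = 0"
  shows "d_h p q (row_cone p q F) = F"
proof (rule ext)+
  fix x y
  show "d_h p q (row_cone p q F) x y = F x y"
  proof (cases "x \<in> gc_tuples (Suc p) \<and> y \<in> gc_tuples q")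
    case True
    then have x: "x \<in> gc_tuples (Suc p)" and y: "y \<in> gc_tuples q"
      by auto
    have "0 = (\<Sum>i\<le>Suc (Suc p). alt_sign i (F (gc_face (Suc p) i (gc_cons (Suc p) (y 0) x)) y))"
      using fun_cong[OF fun_cong[OF dF, of "gc_cons (Suc p) (y 0) x"], of y] y by (simp add: d_h_eq)
    also have "\<dots> = F x y + (\<Sum>i\<le>Suc p. alt_sign (Suc i) (F (gc_cons p (y 0) (gc_face p i x)) y))"
      by (simp add: sum.atMost_Suc_shift gc_face_0_gc_cons[OF x] gc_face_Suc_gc_cons)
    also have "\<dots> = F x y - d_h p q (row_cone p q F) x y"
      using x y by (simp add: d_h_eq row_cone_def alt_sign_Suc sum_negf)
    finally show ?thesis
      by simp
  next
    case False
    then show ?thesis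
      using F0 by (auto simp: d_h_eq)
  qed
qed

section \<open>The double complex of invariant bicochains\<close>

definition diag_invariant ::
  "('g::group_add \<Rightarrow> 'a \<Rightarrow> 'a) \<Rightarrow> nat \<Rightarrow> nat \<Rightarrow> ('g, 'a) bicochain \<Rightarrow> bool" where
  "diag_invariant act p q f \<longleftrightarrow> (\<forall>g. \<forall>x\<in>gc_tuples p. \<forall>y\<in>gc_tuples q.
     act g (f (gc_ltrans (- g) p x) (gc_ltrans (- g) q y)) = f x y)"

lemma Alc_G_iff: "f \<in> Alc_G act p q \<longleftrightarrow> f \<in> Alc act p q \<and> diag_invariant act p q f"
  by (simp add: Alc_G_def diag_invariant_def)

lemma row_cone_Alc:
  assumes F: "F \<in> Alc act (Suc p) q"
  shows "row_cone p q F \<in> Alc act p q"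
proof -
  obtain U where U: "gc_identity_nbhd U" "continuous_on_Gamma (Suc p) q U F"
    using F by (auto simp: Alc_iff)
  have "continuous_map (bi_Gamma_top p U q) (gc_tuple_top (Suc p)) (\<lambda>z. gc_cons p (snd z 0) (fst z))"
  proof (rule continuous_map_into_gc_tuple_top)
    fix k assume "k \<le> Suc p"
    then show "continuous_map (bi_Gamma_top p U q) euclidean (\<lambda>z. gc_cons p (snd z 0) (fst z) k)"
      using continuous_map_compose'[OF continuous_map_bi_Gamma_snd continuous_map_gc_component[of 0 q]]
        continuous_map_compose'[OF continuous_map_bi_Gamma_fst continuous_map_gc_component[of "k - 1" p]]
      by (cases k) (simp_all add: gc_cons_def)
  qed simp
  then have "continuous_map (bi_Gamma_top p U q) (bi_Gamma_top (Suc p) U q)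
      (\<lambda>z. (gc_cons p (snd z 0) (fst z), snd z))"
    by (intro continuous_map_into_bi_Gamma_top) (auto intro: continuous_map_bi_Gamma_snd)
  then have "continuous_map (bi_Gamma_top p U q) euclidean (\<lambda>z. F (gc_cons p (snd z 0) (fst z)) (snd z))"
    using continuous_map_compose'[OF _ U(2)[unfolded continuous_on_Gamma_def]] by fastforce
  then have "continuous_on_Gamma p q U (row_cone p q F)"
    unfolding continuous_on_Gamma_def
    by (rule continuous_map_eq) (use gc_Gamma_subset in \<open>auto simp: row_cone_def\<close>)
  then show ?thesis
    using U(1) by (auto simp: Alc_iff row_cone_def)
qed

lemma diag_invariant_row_cone:
  fixes F :: "('g::group_add, 'a::zero) bicochain"
  assumes "diag_invariant act (Suc p) q F"
  shows "diag_invariant act p q (row_cone p q F)"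
  unfolding diag_invariant_def
proof (intro allI ballI)
  fix g and x y :: "nat \<Rightarrow> 'g" assume "x \<in> gc_tuples p" "y \<in> gc_tuples q"
  moreover have "gc_ltrans (- g) q y 0 = - g + y 0"
    by (simp add: gc_ltrans_def)
  ultimately show "act g (row_cone p q F (gc_ltrans (- g) p x) (gc_ltrans (- g) q y)) = row_cone p q F x y"
    using assms by (simp add: row_cone_def diag_invariant_def gc_cons_gc_ltrans)
qed

context
  fixes act :: "'g::topological_group_add \<Rightarrow> 'a::topological_ab_group_add \<Rightarrow> 'a"
  assumes G_module: "topological_G_module act"
begin

lemma act_add: "act g (a + b) = act g a + act g b"
  using G_module by (simp add: topological_G_module_def)

lemma act_act: "act g (act h a) = act (g + h) a"
  using G_module by (simp add: topological_G_module_def)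

lemma act_zero [simp]: "act g 0 = 0"
  using act_add[of g 0 0] by simp

lemma act_uminus: "act g (- a) = - act g a"
  using act_add[of g a "- a"] by (simp add: eq_neg_iff_add_eq_0 add.commute)

lemma act_sum: "act g (\<Sum>i\<in>I. f i) = (\<Sum>i\<in>I. act g (f i))"
  by (induction I rule: infinite_finite_induct) (simp_all add: act_add)

lemma act_alt_sign: "act g (alt_sign i a) = alt_sign i (act g a)"
  by (simp add: alt_sign_def act_uminus)

lemma continuous_map_act:
  assumes "continuous_map X euclidean u" "continuous_map X euclidean v"
  shows "continuous_map X euclidean (\<lambda>z. act (u z) (v z))"
proof -
  have "continuous_map X euclidean (\<lambda>z. (u z, v z))"
    using continuous_map_pairedI[OF assms] by simp
  moreover have "continuous_map euclidean euclidean (\<lambda>p. act (fst p) (snd p))"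
    using G_module by (simp add: topological_G_module_def)
  ultimately have "continuous_map X euclidean (\<lambda>z. (\<lambda>p. act (fst p) (snd p)) (u z, v z))"
    by (rule continuous_map_compose')
  then show ?thesis
    by simp
qed

lemma diag_invariant_d_v: "diag_invariant act p q f \<Longrightarrow> diag_invariant act p (Suc q) (d_v p q f)"
  by (simp add: diag_invariant_def d_v_eq gc_face_gc_ltrans act_alt_sign act_sum)

lemma diag_invariant_d_h: "diag_invariant act p q f \<Longrightarrow> diag_invariant act (Suc p) q (d_h p q f)"
  by (simp add: diag_invariant_def d_h_eq gc_face_gc_ltrans act_alt_sign act_sum)

lemma double_complex_Alc_G: "double_complex (Alc_G act) d_v d_h"
proof
  fix p q and f g :: "('g, 'a) bicochain"
  show "0 \<in> Alc_G act p q"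
    by (simp add: Alc_G_iff Alc_zero diag_invariant_def)
  show "f \<in> Alc_G act p q \<Longrightarrow> g \<in> Alc_G act p q \<Longrightarrow> f + g \<in> Alc_G act p q"
    by (simp add: Alc_G_iff Alc_add diag_invariant_def act_add)
  show "f \<in> Alc_G act p q \<Longrightarrow> - f \<in> Alc_G act p q"
    by (simp add: Alc_G_iff Alc_uminus diag_invariant_def act_uminus)
  show "f \<in> Alc_G act p q \<Longrightarrow> d_v p q f \<in> Alc_G act p (Suc q)"
    by (simp add: Alc_G_iff Alc_d_v diag_invariant_d_v)
  show "f \<in> Alc_G act p q \<Longrightarrow> d_h p q f \<in> Alc_G act (Suc p) q"
    by (simp add: Alc_G_iff Alc_d_h diag_invariant_d_h)
qed (simp_all add: d_v_add d_h_add d_v_d_v d_h_d_h d_v_d_h)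

lemma gc_equivariant_gc_d: "gc_equivariant act n f \<Longrightarrow> gc_equivariant act (Suc n) (gc_d n f)"
  by (simp add: gc_equivariant_def gc_d_eq gc_face_gc_ltrans act_alt_sign act_sum)

lemma cochain_complex_Cc: "cochain_complex (Cc act) gc_d"
proof
  fix n and f g :: "(nat \<Rightarrow> 'g) \<Rightarrow> 'a"
  show "0 \<in> Cc act n"
    by (simp add: Cc_def gc_equivariant_def zero_fun_def)
  show "f \<in> Cc act n \<Longrightarrow> g \<in> Cc act n \<Longrightarrow> f + g \<in> Cc act n"
    by (auto simp: Cc_def gc_equivariant_def act_add plus_fun_def intro: continuous_map_group_add)
  show "f \<in> Cc act n \<Longrightarrow> - f \<in> Cc act n"
    by (auto simp: Cc_def gc_equivariant_def act_uminus fun_Compl_def intro: continuous_map_group_uminus)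
  show "gc_d n f \<in> Cc act (Suc n)" if f: "f \<in> Cc act n"
  proof -
    have "continuous_map (subtopology (gc_tuple_top (Suc n)) (gc_tuples (Suc n))) euclidean (gc_d n f)"
      using f continuous_map_gc_d[of n UNIV f "gc_tuples (Suc n)"] by (simp add: Cc_def)
    then have "continuous_map (gc_tuple_top (Suc n)) euclidean (gc_d n f)"
      by (metis subtopology_topspace topspace_gc_tuple_top)
    moreover have "\<forall>x. x \<notin> gc_tuples (Suc n) \<longrightarrow> gc_d n f x = 0"
      by (simp add: gc_d_def)
    ultimately show ?thesis
      using f gc_equivariant_gc_d by (simp add: Cc_def)
  qed
qed (simp_all add: gc_d_add gc_d_gc_d)

lemma cochain_complex_Clc: "cochain_complex (Clc act) gc_d"
proof
  fix n and f g :: "(nat \<Rightarrow> 'g) \<Rightarrow> 'a"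
  show "0 \<in> Clc act n"
    using gc_identity_nbhd_UNIV by (auto simp: Clc_def gc_equivariant_def zero_fun_def)
  show "f + g \<in> Clc act n" if f: "f \<in> Clc act n" and g: "g \<in> Clc act n"
  proof -
    obtain U V where U: "gc_identity_nbhd U" "continuous_map (Gamma_top U n) euclidean f"
      and V: "gc_identity_nbhd V" "continuous_map (Gamma_top V n) euclidean g"
      using f g unfolding Clc_def mem_Collect_eq by blast
    have "continuous_map (Gamma_top (U \<inter> V) n) euclidean (\<lambda>x. f x + g x)"
      by (intro continuous_map_group_add continuous_map_Gamma_top_mono[OF _ U(2)]
          continuous_map_Gamma_top_mono[OF _ V(2)]) auto
    then show ?thesis
      using f g gc_identity_nbhd_Int[OF U(1) V(1)]
      by (auto simp: Clc_def gc_equivariant_def act_add plus_fun_def)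
  qed
  show "f \<in> Clc act n \<Longrightarrow> - f \<in> Clc act n"
    by (auto simp: Clc_def gc_equivariant_def act_uminus fun_Compl_def intro: continuous_map_group_uminus)
  show "gc_d n f \<in> Clc act (Suc n)" if f: "f \<in> Clc act n"
  proof -
    obtain U where U: "gc_identity_nbhd U" "continuous_map (Gamma_top U n) euclidean f"
      using f unfolding Clc_def mem_Collect_eq by blast
    then have "continuous_map (Gamma_top U (Suc n)) euclidean (gc_d n f)"
      using continuous_map_gc_d[of n "gc_Gamma U n" f "gc_Gamma U (Suc n)"]
        gc_face_gc_Gamma gc_Gamma_subset by blast
    moreover have "\<forall>x. x \<notin> gc_tuples (Suc n) \<longrightarrow> gc_d n f x = 0"
      by (simp add: gc_d_def)
    ultimately show ?thesis
      using f U(1) gc_equivariant_gc_d unfolding Clc_def by blast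
  qed
qed (simp_all add: gc_d_add gc_d_gc_d)

lemma aug_mem_Alc_G:
  assumes h: "h \<in> Cc act p"
  shows "aug p h \<in> Alc_G act p 0"
proof -
  have "continuous_map (gc_tuple_top p) euclidean h"
    using h by (simp add: Cc_def)
  then have "continuous_map (bi_Gamma_top p UNIV 0) euclidean (\<lambda>z. h (fst z))"
    by (rule continuous_map_compose'[OF continuous_map_bi_Gamma_fst])
  then have "continuous_on_Gamma p 0 UNIV (aug p h)"
    unfolding continuous_on_Gamma_def by (rule continuous_map_eq) (auto simp: aug_def)
  then show ?thesis
    using h gc_identity_nbhd_UNIV
    by (auto simp: Alc_G_iff Alc_iff diag_invariant_def aug_def Cc_def gc_equivariant_def)
qed

lemma aug_row_mem_Alc_G:
  assumes f: "f \<in> Clc act q"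
  shows "aug_row q f \<in> Alc_G act 0 q"
proof -
  obtain U where U: "gc_identity_nbhd U" "continuous_map (Gamma_top U q) euclidean f"
    using f unfolding Clc_def mem_Collect_eq by blast
  have "continuous_map (bi_Gamma_top 0 U q) (Gamma_top U q) snd"
    by (rule continuous_map_into_subtopology[OF continuous_map_bi_Gamma_snd]) auto
  then have "continuous_map (bi_Gamma_top 0 U q) euclidean (\<lambda>z. f (snd z))"
    using continuous_map_compose'[OF _ U(2)] by blast
  then have "continuous_on_Gamma 0 q U (aug_row q f)"
    unfolding continuous_on_Gamma_def
    by (rule continuous_map_eq) (use gc_Gamma_subset in \<open>auto simp: aug_row_def\<close>)
  then show ?thesis
    using f U(1)
    by (auto simp: Alc_G_iff Alc_iff diag_invariant_def aug_row_def Clc_def gc_equivariant_def)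
qed

lemma Alc_G_column_exact_0:
  assumes ce: "column_exact act p" and F: "F \<in> Alc_G act p 0" and dF: "d_v p 0 F = 0"
  shows "\<exists>h\<in>Cc act p. F = aug p h"
proof -
  obtain h where h: "h \<in> Ac act p" "aug p h = F"
    using column_exact_0[OF ce _ dF] F by (auto simp: Alc_G_iff)
  obtain y :: "nat \<Rightarrow> 'g" where y: "y \<in> gc_tuples 0"
    using gc_tuples_nonempty by blast
  have "act g (h (gc_ltrans (- g) p x)) = h x" if "x \<in> gc_tuples p" for g x
    using F that y h(2) by (auto simp: Alc_G_iff diag_invariant_def aug_def)
  then have "h \<in> Cc act p"
    using h(1) by (simp add: Cc_def Ac_def gc_equivariant_def)
  then show ?thesis
    using h(2) by blast
qed

lemma diag_invariant_invariantize: "diag_invariant act p q (invariantize act p q H)"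
proof -
  have "act g (invariantize act p q H (gc_ltrans (- g) p x) (gc_ltrans (- g) q y)) =
      invariantize act p q H x y" if "x \<in> gc_tuples p" "y \<in> gc_tuples q" for g x y
  proof -
    have "- (- g + x 0) + - g = - x 0"
      by (simp add: minus_add add.assoc)
    then show ?thesis
      using that by (simp add: invariantize_def gc_ltrans_gc_ltrans act_act add.assoc[symmetric])
        (simp add: gc_ltrans_def)
  qed
  then show ?thesis
    by (simp add: diag_invariant_def)
qed

lemma invariantize_Alc:
  assumes H: "H \<in> Alc act p q"
  shows "invariantize act p q H \<in> Alc act p q"
proof -
  obtain U where U: "gc_identity_nbhd U" "continuous_on_Gamma p q U H"
    using H unfolding Alc_iff by blast
  have x0: "continuous_map (bi_Gamma_top p U q) euclidean (\<lambda>z. fst z 0)"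
    by (rule continuous_map_compose'[OF continuous_map_bi_Gamma_fst continuous_map_gc_component]) simp
  have "continuous_map (bi_Gamma_top p U q) (bi_Gamma_top p U q)
      (\<lambda>z. (gc_ltrans (- fst z 0) p (fst z), gc_ltrans (- fst z 0) q (snd z)))"
    using continuous_map_group_uminus[OF x0]
    by (intro continuous_map_into_bi_Gamma_top)
      (auto intro: continuous_map_gc_ltrans continuous_map_bi_Gamma_fst continuous_map_bi_Gamma_snd
        gc_ltrans_gc_Gamma)
  then have "continuous_map (bi_Gamma_top p U q) euclidean
      (\<lambda>z. H (gc_ltrans (- fst z 0) p (fst z)) (gc_ltrans (- fst z 0) q (snd z)))"
    using continuous_map_compose'[OF _ U(2)[unfolded continuous_on_Gamma_def]] by fastforce
  then have "continuous_on_Gamma p q U (invariantize act p q H)"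
    unfolding continuous_on_Gamma_def
    by (rule continuous_map_eq[OF continuous_map_act[OF x0]])
      (use gc_Gamma_subset in \<open>auto simp: invariantize_def\<close>)
  then show ?thesis
    using U(1) by (auto simp: Alc_iff invariantize_def)
qed

lemma d_v_invariantize: "d_v p q (invariantize act p q H) = invariantize act p (Suc q) (d_v p q H)"
  by (rule ext)+
    (simp add: d_v_eq invariantize_def gc_face_gc_ltrans act_alt_sign act_sum)

lemma invariantize_Alc_G: "F \<in> Alc_G act p q \<Longrightarrow> invariantize act p q F = F"
  by (rule ext)+ (auto simp: Alc_G_iff Alc_iff diag_invariant_def invariantize_def)

lemma Alc_G_column_exact_Suc:
  assumes ce: "column_exact act p" and F: "F \<in> Alc_G act p (Suc q)" and dF: "d_v p (Suc q) F = 0"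
  shows "\<exists>H\<in>Alc_G act p q. F = d_v p q H"
proof -
  obtain H where H: "H \<in> Alc act p q" "d_v p q H = F"
    using column_exact_Suc[OF ce _ dF] F by (auto simp: Alc_G_iff)
  have "d_v p q (invariantize act p q H) = F"
    using H(2) invariantize_Alc_G[OF F] by (simp add: d_v_invariantize)
  moreover have "invariantize act p q H \<in> Alc_G act p q"
    using invariantize_Alc[OF H(1)] diag_invariant_invariantize by (simp add: Alc_G_iff)
  ultimately show ?thesis
    by metis
qed

lemma Alc_G_row_const:
  assumes F: "F \<in> Alc_G act 0 q" and dF: "d_h 0 q F = 0"
    and c: "c \<in> gc_tuples 0" "c' \<in> gc_tuples 0"
  shows "F c y = F c' y"
proof (cases "y \<in> gc_tuples q")
  case True
  define x where "x = restrict (\<lambda>k. if k = 0 then c' 0 else c 0) {..Suc 0}"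
  have "gc_face 0 0 x = c" "gc_face 0 (Suc 0) x = c'"
    using c by (auto simp: gc_face_def x_def gc_tuples_iff intro!: ext)
  moreover have "x \<in> gc_tuples (Suc 0)"
    by (simp add: x_def gc_tuples_def)
  ultimately have "d_h 0 q F x y = F c y - F c' y"
    using True by (simp add: d_h_eq sum.atMost_Suc alt_sign_def)
  then show ?thesis
    using dF by simp
next
  case False
  then show ?thesis
    using F c by (simp add: Alc_G_iff Alc_iff)
qed

lemma Alc_G_row_exact_0:
  assumes F: "F \<in> Alc_G act 0 q" and dF: "d_h 0 q F = 0"
  shows "\<exists>f\<in>Clc act q. F = aug_row q f"
proof -
  obtain U where U: "gc_identity_nbhd U" "continuous_on_Gamma 0 q U F"
    and F0: "\<forall>x y. \<not> (x \<in> gc_tuples 0 \<and> y \<in> gc_tuples q) \<longrightarrow> F x y = 0"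
    using F by (auto simp: Alc_G_iff Alc_iff)
  obtain u :: "nat \<Rightarrow> 'g" where u: "u \<in> gc_tuples 0"
    using gc_tuples_nonempty by blast
  define f where "f y = (if y \<in> gc_tuples q then F u y else 0)" for y
  have "continuous_map (Gamma_top U q) euclidean f"
  proof -
    have "continuous_map (Gamma_top U q) (bi_Gamma_top 0 U q) (\<lambda>y. (u, y))"
      using u by (intro continuous_map_into_bi_Gamma_top) (auto intro: continuous_map_from_subtopology)
    then have "continuous_map (Gamma_top U q) euclidean (\<lambda>y. F u y)"
      using continuous_map_compose'[OF _ U(2)[unfolded continuous_on_Gamma_def]] by fastforce
    then show ?thesis
      by (rule continuous_map_eq) (use gc_Gamma_subset in \<open>auto simp: f_def\<close>)
  qed
  moreover have "act g (f (gc_ltrans (- g) q y)) = f y" if "y \<in> gc_tuples q" for g y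
  proof -
    have "act g (f (gc_ltrans (- g) q y)) = act g (F (gc_ltrans (- g) 0 (gc_ltrans g 0 u)) (gc_ltrans (- g) q y))"
      using Alc_G_row_const[OF F dF u, of "gc_ltrans (- g) 0 (gc_ltrans g 0 u)"] by (simp add: f_def)
    also have "\<dots> = F (gc_ltrans g 0 u) y"
      using F that by (simp add: Alc_G_iff diag_invariant_def)
    also have "\<dots> = f y"
      using Alc_G_row_const[OF F dF _ u, of "gc_ltrans g 0 u"] that by (simp add: f_def)
    finally show ?thesis .
  qed
  ultimately have "f \<in> Clc act q"
    using U(1) by (auto simp: Clc_def gc_equivariant_def f_def)
  moreover have "F = aug_row q f"
    using Alc_G_row_const[OF F dF _ u] F0 by (auto simp: aug_row_def f_def fun_eq_iff)
  ultimately show ?thesis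
    by blast
qed

lemma Alc_G_row_exact_Suc:
  assumes F: "F \<in> Alc_G act (Suc p) q" and dF: "d_h (Suc p) q F = 0"
  shows "\<exists>H\<in>Alc_G act p q. F = d_h p q H"
proof -
  have "row_cone p q F \<in> Alc_G act p q"
    using F row_cone_Alc[of F act p q] diag_invariant_row_cone[of act p q F] by (simp add: Alc_G_iff)
  moreover have "d_h p q (row_cone p q F) = F"
    using F d_h_row_cone[OF dF] by (simp add: Alc_G_iff Alc_iff)
  ultimately show ?thesis
    by metis
qed

lemma augmented_columns:
  assumes "\<forall>p. column_exact act p"
  shows "augmented_double_complex (Alc_G act) d_v d_h (Cc act) gc_d aug"
proof (rule augmented_double_complex.intro[OF double_complex_Alc_G cochain_complex_Cc],
    unfold_locales)
  fix p q and x y :: "(nat \<Rightarrow> 'g) \<Rightarrow> 'a" and F :: "('g, 'a) bicochain"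
  show "x \<in> Cc act p \<Longrightarrow> aug p x \<in> Alc_G act p 0"
    by (rule aug_mem_Alc_G)
  show "aug p (x + y) = aug p x + aug p y"
    by (rule aug_add)
  show "x \<in> Cc act p \<Longrightarrow> aug p x = 0 \<Longrightarrow> x = 0"
    by (rule aug_eq_0) (auto simp: Cc_def)
  show "d_v p 0 (aug p x) = 0"
    by (rule d_v_aug)
  show "d_h p 0 (aug p x) = aug (Suc p) (gc_d p x)"
    by (rule d_h_aug)
  show "F \<in> Alc_G act p 0 \<Longrightarrow> d_v p 0 F = 0 \<Longrightarrow> \<exists>x\<in>Cc act p. F = aug p x"
    using Alc_G_column_exact_0 assms by blast
  show "F \<in> Alc_G act p (Suc q) \<Longrightarrow> d_v p (Suc q) F = 0 \<Longrightarrow> \<exists>h\<in>Alc_G act p q. F = d_v p q h"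
    using Alc_G_column_exact_Suc assms by blast
qed

lemma augmented_rows:
  "augmented_double_complex (\<lambda>p q. Alc_G act q p) (\<lambda>p q. d_h q p) (\<lambda>p q. d_v q p) (Clc act) gc_d aug_row"
proof (rule augmented_double_complex.intro[OF double_complex.transpose[OF double_complex_Alc_G]
      cochain_complex_Clc], unfold_locales)
  fix p q and x y :: "(nat \<Rightarrow> 'g) \<Rightarrow> 'a" and F :: "('g, 'a) bicochain"
  show "x \<in> Clc act p \<Longrightarrow> aug_row p x \<in> Alc_G act 0 p"
    by (rule aug_row_mem_Alc_G)
  show "aug_row p (x + y) = aug_row p x + aug_row p y"
    by (rule aug_row_add)
  show "x \<in> Clc act p \<Longrightarrow> aug_row p x = 0 \<Longrightarrow> x = 0"
    by (rule aug_row_eq_0) (auto simp: Clc_def)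
  show "d_h 0 p (aug_row p x) = 0"
    by (rule d_h_aug_row)
  show "d_v 0 p (aug_row p x) = aug_row (Suc p) (gc_d p x)"
    by (rule d_v_aug_row)
  show "F \<in> Alc_G act 0 p \<Longrightarrow> d_h 0 p F = 0 \<Longrightarrow> \<exists>x\<in>Clc act p. F = aug_row p x"
    by (rule Alc_G_row_exact_0)
  show "F \<in> Alc_G act (Suc q) p \<Longrightarrow> d_h (Suc q) p F = 0 \<Longrightarrow> \<exists>h\<in>Alc_G act q p. F = d_h q p h"
    by (rule Alc_G_row_exact_Suc)
qed

end

lemma fun_add_eq: "fun_add = (+)"
  by (rule ext)+ (simp add: fun_add_def)

lemma tot_add_eq: "tot_add = (+)"
  by (rule ext)+ (simp add: tot_add_def)

lemma Hc_eq: "Hc act n = cohomology (Cc act) gc_d (+) 0 n"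
  by (simp add: Hc_def fun_add_eq zero_fun_def)

lemma Hlc_eq: "Hlc act n = cohomology (Clc act) gc_d (+) 0 n"
  by (simp add: Hlc_def fun_add_eq zero_fun_def)

lemma Tot_eq: "Tot act = tot_cochains (Alc_G act)"
  by (simp add: Tot_def tot_cochains_def zero_fun_def fun_eq_iff)

lemma d_tot_eq: "d_tot = tot_diff d_v d_h"
  by (simp add: d_tot_def tot_diff_def fun_eq_iff)

lemma HTot_eq: "HTot act n = cohomology (tot_cochains (Alc_G act)) (tot_diff d_v d_h) (+) 0 n"
  by (simp add: HTot_def Tot_eq d_tot_eq tot_add_eq zero_fun_def)

lemma j_v_eq: "j_v n f = tot_single n (aug n f)"
  by (simp add: j_v_def tot_single_def zero_fun_def fun_eq_iff)

theorem mainTheorem3: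
  fixes act :: "'g::topological_group_add \<Rightarrow> 'a::topological_ab_group_add \<Rightarrow> 'a"
  assumes "topological_G_module act"
    and "\<forall>p. column_exact act p"
  shows "(\<forall>n. \<exists>\<phi>. \<phi> \<in> iso (Hc act n) (HTot act n) \<and>
            (\<forall>f \<in> carrier (cocycle_grp (Cc act) gc_d fun_add (\<lambda>_. 0) n).
               \<phi> (cohom_class (Cc act) gc_d fun_add (\<lambda>_. 0) n f) =
               cohom_class (Tot act) d_tot tot_add (\<lambda>_ _ _. 0) n (j_v n f)))
       \<and> (\<forall>p. Hlc act p \<cong> HTot act p \<and> HTot act p \<cong> Hc act p \<and> Hlc act p \<cong> Hc act p)"
proof -
  interpret col: augmented_double_complex "Alc_G act" d_v d_h "Cc act" gc_d aug
    using augmented_columns[OF assms] .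
  interpret row: augmented_double_complex "\<lambda>p q. Alc_G act q p" "\<lambda>p q. d_h q p" "\<lambda>p q. d_v q p"
      "Clc act" gc_d aug_row
    using augmented_rows[OF assms(1)] .
  have zero: "(\<lambda>_. 0) = 0" "(\<lambda>_ _ _. 0) = 0"
    by (simp_all add: zero_fun_def)
  have "\<exists>\<phi>. \<phi> \<in> iso (Hc act n) (HTot act n) \<and>
      (\<forall>f \<in> carrier (cocycle_grp (Cc act) gc_d fun_add (\<lambda>_. 0) n).
         \<phi> (cohom_class (Cc act) gc_d fun_add (\<lambda>_. 0) n f) =
         cohom_class (Tot act) d_tot tot_add (\<lambda>_ _ _. 0) n (j_v n f))" for n
    using col.edge_cohomology_iso[of n]
    unfolding Hc_eq HTot_eq fun_add_eq tot_add_eq zero Tot_eq d_tot_eq j_v_eq .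
  moreover have "Hlc act p \<cong> HTot act p" for p
    using iso_trans[OF row.edge_cohomology_is_iso col.cohomology_transpose_iso]
    unfolding Hlc_eq HTot_eq .
  moreover have "HTot act p \<cong> Hc act p" for p
    using group.iso_sym[OF col.E.group_cohomology col.edge_cohomology_is_iso]
    unfolding Hc_eq HTot_eq .
  ultimately show ?thesis
    using iso_trans by blast
qed

end
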